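(* Let $A$ be a VPA. The functions $t_f:\mathrm{AllFlat}\to\mathrm{rConf}$ and $\nu_f=\mathsf{rep}\circ t_f:\mathrm{AllFlat}\to\mathrm{Rep}$ are rational.
   Context: VPA $A=(Q,\Sigma,\Gamma,\bot,q_0,\delta,F)$ over a pushdown alphabet $\Sigma=\Sigma_c\cup\Sigma_r\cup\Sigma_{\mathit{int}}$ with $\delta_c:Q\times\Sigma_c\to(\Gamma\setminus\{\bot\})\times Q$, $\delta_r:Q\times\Sigma_r\times\Gamma\to Q$, $\delta_{\mathit{int}}:Q\times\Sigma_{\mathit{int}}\to Q$; configurations $\alpha q$ with $\alpha\in\bot(\Gamma\setminus\{\bot\})^*$; a call letter $a$ with $\delta(p,a)=(\gamma,q)$ maps $\alpha p$ to $\alpha\gamma q$; internal letters change only the state; return letters pop the top $\gamma\ne\bot$ (new state $\delta(p,a,\gamma)$) or read $\bot$ without popping. $\delta(c,w)$: configuration reached from $c$ on $w$; $\mathcal L(c)$: words leading to a state in $F$. $\mathrm{rConf}$: configurations reachable from $\bot q_0$. $\mathsf{rep}(c)$: length-lexicographically least (for fixed linear orders on $\Gamma$ and $Q$) $c'\in\mathrm{rConf}$ with $\mathcal L(c')=\mathcal L(c)$; $\mathrm{Rep}=\mathsf{rep}(\mathrm{rConf})$. $\Sigma_f=\Sigma_c\cup Q\cup Q^Q$ (disjoint union); $\mathrm{AllFlat}=Q^*(\Sigma_c\cup Q^QQ^* )^*$, each element factors uniquely as $s_0s_1\cdots s_m$ with $s_0\in Q^*$, $s_i\in\Sigma_c\cup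 Q^QQ^*$. $t_f(\varepsilon)=\bot q_0$; $t_f(q_1\cdots q_n)=\bot q_1$ for $n\ge1$; if $s_m\in\Sigma_c$ then $t_f(s_0\cdots s_m)=\delta(t_f(s_0\cdots s_{m-1}),s_m)$; if $s_m=\tau q_2\cdots q_k\in Q^QQ^*$ and $t_f(s_0\cdots s_{m-1})=\alpha q$ then $t_f(s_0\cdots s_m)=\alpha\tau(q)$. A partial function between free monoids is rational if its graph is a rational subset of the product monoid (recognized by a finite transducer). *)

theory Defs
  imports Main
begin

text \<open>The pushdown alphabet is the (finite) letter type 'a, partitioned into
  call, return and internal letters by the function kind.\<close>
datatype lkind = KCall | KRet | KInt

text \<open>The transition functions are total; dc / dr / di are only
  consulted on call / return / internal letters respectively.\<close>
record ('q, 'g, 'a) vpa =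
  kind :: "'a \<Rightarrow> lkind"
  bot  :: 'g
  q0   :: 'q
  dc   :: "'q \<Rightarrow> 'a \<Rightarrow> 'g \<times> 'q"
  dr   :: "'q \<Rightarrow> 'a \<Rightarrow> 'g \<Rightarrow> 'q"
  di   :: "'q \<Rightarrow> 'a \<Rightarrow> 'q"
  fin  :: "'q set"

definition wf_vpa :: "('q, 'g, 'a) vpa \<Rightarrow> bool" where
  "wf_vpa A \<longleftrightarrow> (\<forall>p a. kind A a = KCall \<longrightarrow> fst (dc A p a) \<noteq> bot A)"

text \<open>A configuration alpha q: the stack alpha is a list written bottom-first
  (its head is bot, its last element is the top), paired with the state q.\<close>
type_synonym ('g, 'q) conf = "'g list \<times> 'q"

fun step :: "('q, 'g, 'a) vpa \<Rightarrow> ('g, 'q) conf \<Rightarrow> 'a \<Rightarrow> ('g, 'q) conf" where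
  "step A (\<alpha>, p) a =
     (case kind A a of
        KCall \<Rightarrow> (\<alpha> @ [fst (dc A p a)], snd (dc A p a))
      | KInt \<Rightarrow> (\<alpha>, di A p a)
      | KRet \<Rightarrow> (if last \<alpha> = bot A then (\<alpha>, dr A p a (bot A))
               else (butlast \<alpha>, dr A p a (last \<alpha>))))"

definition run :: "('q, 'g, 'a) vpa \<Rightarrow> ('g, 'q) conf \<Rightarrow> 'a list \<Rightarrow> ('g, 'q) conf" where
  "run A c w = foldl (step A) c w"

definition lang :: "('q, 'g, 'a) vpa \<Rightarrow> ('g, 'q) conf \<Rightarrow> 'a list set" where
  "lang A c = {w. snd (run A c w) \<in> fin A}"

definition init_conf :: "('q, 'g, 'a) vpa \<Rightarrow> ('g, 'q) conf" where
  "init_conf A = ([bot A], q0 A)"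

definition rConf :: "('q, 'g, 'a) vpa \<Rightarrow> ('g, 'q) conf set" where
  "rConf A = {run A (init_conf A) w | w. True}"

definition conf_less :: "('g::linorder, 'q::linorder) conf \<Rightarrow> ('g, 'q) conf \<Rightarrow> bool" where
  "conf_less c c' \<longleftrightarrow>
     length (fst c) < length (fst c') \<or>
     (length (fst c) = length (fst c') \<and>
        (lexordp (<) (fst c) (fst c') \<or> (fst c = fst c' \<and> snd c < snd c')))"

definition rep :: "('q::linorder, 'g::linorder, 'a) vpa \<Rightarrow> ('g, 'q) conf \<Rightarrow> ('g, 'q) conf" where
  "rep A c = (THE c'. c' \<in> rConf A \<and> lang A c' = lang A c \<and>
                 (\<forall>c''\<in>rConf A. lang A c'' = lang A c \<longrightarrow> c'' = c' \<or> conf_less c' c''))"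

text \<open>The flat alphabet Sigma_f = Sigma_c + Q + Q^Q (only FC a with a a call letter
  is a letter of Sigma_f).\<close>
datatype ('a, 'q) flat = FC 'a | FQ 'q | FT "'q \<Rightarrow> 'q"

definition is_block :: "('q, 'g, 'a) vpa \<Rightarrow> ('a, 'q) flat list \<Rightarrow> bool" where
  "is_block A s \<longleftrightarrow> (\<exists>a. kind A a = KCall \<and> s = [FC a]) \<or> (\<exists>\<tau> qs. s = FT \<tau> # map FQ qs)"

definition AllFlat :: "('q, 'g, 'a) vpa \<Rightarrow> ('a, 'q) flat list set" where
  "AllFlat A = {map FQ qs @ concat ss | qs ss. \<forall>s\<in>set ss. is_block A s}"

definition tf_init :: "('q, 'g, 'a) vpa \<Rightarrow> 'q list \<Rightarrow> ('g, 'q) conf" where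
  "tf_init A qs = (case qs of [] \<Rightarrow> init_conf A | q # _ \<Rightarrow> ([bot A], q))"

fun block_step :: "('q, 'g, 'a) vpa \<Rightarrow> ('g, 'q) conf \<Rightarrow> ('a, 'q) flat list \<Rightarrow> ('g, 'q) conf" where
  "block_step A c [FC a] = step A c a"
| "block_step A c (FT \<tau> # _) = (fst c, \<tau> (snd c))"
| "block_step A c _ = c"

text \<open>Graph of t_f : AllFlat \<rightarrow> rConf, defined along the (unique) factorisation
  s_0 s_1 ... s_m of a flat word.\<close>
definition tf_graph :: "('q, 'g, 'a) vpa \<Rightarrow> (('a, 'q) flat list \<times> ('g, 'q) conf) set" where
  "tf_graph A = {(map FQ qs @ concat ss, foldl (block_step A) (tf_init A qs) ss) | qs ss.
                   \<forall>s\<in>set ss. is_block A s}"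

definition conf_word :: "('g, 'q) conf \<Rightarrow> ('g + 'q) list" where
  "conf_word c = map Inl (fst c) @ [Inr (snd c)]"

text \<open>Graphs of t_f and nu_f = rep o t_f as relations between free monoids.\<close>
definition tf_rel :: "('q, 'g, 'a) vpa \<Rightarrow> (('a, 'q) flat list \<times> ('g + 'q) list) set" where
  "tf_rel A = {(w, conf_word c) | w c. (w, c) \<in> tf_graph A}"

definition nuf_rel :: "('q::linorder, 'g::linorder, 'a) vpa \<Rightarrow> (('a, 'q) flat list \<times> ('g + 'q) list) set" where
  "nuf_rel A = {(w, conf_word (rep A c)) | w c. (w, c) \<in> tf_graph A}"

definition rel_prod :: "('a list \<times> 'b list) set \<Rightarrow> ('a list \<times> 'b list) set \<Rightarrow> ('a list \<times> 'b list) set" where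
  "rel_prod X Y = {(u @ u', v @ v') | u v u' v'. (u, v) \<in> X \<and> (u', v') \<in> Y}"

inductive_set rel_star :: "('a list \<times> 'b list) set \<Rightarrow> ('a list \<times> 'b list) set" for X where
  rel_star_Nil: "([], []) \<in> rel_star X"
| rel_star_step: "(u, v) \<in> X \<Longrightarrow> (u', v') \<in> rel_star X \<Longrightarrow> (u @ u', v @ v') \<in> rel_star X"

inductive rational :: "('a list \<times> 'b list) set \<Rightarrow> bool" where
  rat_finite: "finite X \<Longrightarrow> rational X"
| rat_union: "rational X \<Longrightarrow> rational Y \<Longrightarrow> rational (X \<union> Y)"
| rat_prod: "rational X \<Longrightarrow> rational Y \<Longrightarrow> rational (rel_prod X Y)"
| rat_star: "rational X \<Longrightarrow> rational (rel_star X)"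

end

theory Submission
  imports Defs
begin

text \<open>
  A language with finitely many left quotients (a regular language) has a rational image
  under every morphism into a product of free monoids; both graphs are obtained as such images.

  For \<open>t\<^sub>f\<close>, align a flat word with its configuration word on a second track, placing under
  each call letter the symbol it pushes.  A finite automaton recognises the aligned words,
  since it only needs to track the current state: returns never occur in flat words.

  For \<open>\<nu>\<^sub>f\<close>, it suffices that the relation \<open>c \<mapsto> rep c\<close> is synchronous, i.e. that the
  convolution of the two configuration words, aligned at the tops of the stacks, forms a regular
  language; merging it with the aligned word of \<open>t\<^sub>f\<close> on a third track then gives a regular
  language again.  Synchronous relations are closed under Boolean operations and projection, and
  \<open>rep\<close> is first-order definable from three synchronous relations.  Language equivalence is one:
  the language of a configuration \<open>B T q\<close> with top part \<open>T\<close> is determined by the runs from \<open>T q\<close>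
  that stay above \<open>T\<close> and, for those that first exhaust \<open>T\<close> in state \<open>p\<close>, by the language of \<open>B p\<close>.
  So a prefix of a convolution matters only through finitely much information.  Reachability is
  another, since whether \<open>\<alpha> \<beta> q\<close> is reachable depends on \<open>\<alpha>\<close> only through the set of states \<open>p\<close>
  with \<open>\<alpha> p\<close> reachable; and the length-lexicographic order is the third.
\<close>

section \<open>Languages with finitely many left quotients\<close>

definition lquot :: "'x list set \<Rightarrow> 'x list \<Rightarrow> 'x list set" where
  "lquot L u = {v. u @ v \<in> L}"

definition regular :: "'x list set \<Rightarrow> bool" where
  "regular L \<longleftrightarrow> finite (range (lquot L))"

lemma lquot_append: "lquot (lquot L u) v = lquot L (u @ v)"
  by (auto simp: lquot_def)

lemma lquot_Nil [simp]: "lquot L [] = L"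
  by (auto simp: lquot_def)

lemma regularI_lquot_eq:
  assumes "finite (range f)" and "\<And>u u'. f u = f u' \<Longrightarrow> lquot L u = lquot L u'"
  shows "regular L"
proof -
  let ?G = "\<lambda>y. lquot L (SOME u. f u = y)"
  have "range (lquot L) \<subseteq> ?G ` range f"
  proof
    fix X assume "X \<in> range (lquot L)"
    then obtain u where u: "X = lquot L u" by auto
    have "f (SOME u'. f u' = f u) = f u" by (rule someI) auto
    then have "?G (f u) = X" using assms(2) u by blast
    then show "X \<in> ?G ` range f" by auto
  qed
  then show ?thesis unfolding regular_def using assms(1) finite_surj by blast
qed

lemma regularI_append:
  assumes "finite (range f)" and "\<And>u u' v. f u = f u' \<Longrightarrow> u @ v \<in> L \<Longrightarrow> u' @ v \<in> L"
  shows "regular L"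
  using assms(1) by (rule regularI_lquot_eq) (auto simp: lquot_def intro: assms(2) dest: sym)

lemma regular_lquot_transfer:
  assumes "regular L" and "\<And>u. lquot L' u = G (lquot L (h u))"
  shows "regular L'"
proof -
  have "range (lquot L') \<subseteq> G ` range (lquot L)" using assms(2) by auto
  then show ?thesis using assms(1) unfolding regular_def by (meson finite_imageI finite_subset)
qed

lemma regular_lquot_transfer2:
  assumes "regular L1" "regular L2" and "\<And>u. lquot L' u = G (lquot L1 u) (lquot L2 u)"
  shows "regular L'"
proof -
  have "range (lquot L') \<subseteq> case_prod G ` (range (lquot L1) \<times> range (lquot L2))"
    using assms(3) by auto
  then show ?thesis
    using assms(1,2) unfolding regular_def by (meson finite_imageI finite_subset finite_SigmaI)
qed

lemma regular_Int: assumes "regular L1" "regular L2" shows "regular (L1 \<inter> L2)"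
  by (rule regular_lquot_transfer2[OF assms, where G="(\<inter>)"]) (auto simp: lquot_def)

lemma regular_Un: assumes "regular L1" "regular L2" shows "regular (L1 \<union> L2)"
  by (rule regular_lquot_transfer2[OF assms, where G="(\<union>)"]) (auto simp: lquot_def)

lemma regular_Compl: assumes "regular L" shows "regular (- L)"
  by (rule regular_lquot_transfer[OF assms, where G=uminus and h=id]) (auto simp: lquot_def)

lemma regular_Diff: "regular L1 \<Longrightarrow> regular L2 \<Longrightarrow> regular (L1 - L2)"
  by (simp add: Diff_eq regular_Int regular_Compl)

lemma regular_UNIV: "regular UNIV"
  by (rule regularI_lquot_eq[where f="\<lambda>_. ()"]) (auto simp: lquot_def)

lemma regular_lists: "regular (lists S)"
  by (rule regularI_lquot_eq[where f="\<lambda>u. u \<in> lists S"]) (auto simp: lquot_def)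

lemma regular_foldl:
  fixes \<delta> :: "'s::finite \<Rightarrow> 'x \<Rightarrow> 's"
  shows "regular {x. foldl \<delta> s x \<in> F}"
  by (rule regularI_lquot_eq[where f="foldl \<delta> s"]) (auto simp: lquot_def)

lemma regular_last: "regular {x. x \<noteq> [] \<and> P (last x)}"
proof (rule regularI_lquot_eq[where f="\<lambda>u. u \<noteq> [] \<and> P (last u)"])
  have last_app: "u @ v \<noteq> [] \<and> P (last (u @ v)) \<longleftrightarrow>
      (if v = [] then u \<noteq> [] \<and> P (last u) else P (last v))" for u v :: "'a list"
    by (auto simp: last_append)
  show "lquot {x. x \<noteq> [] \<and> P (last x)} u = lquot {x. x \<noteq> [] \<and> P (last x)} u'"
    if "(u \<noteq> [] \<and> P (last u)) = (u' \<noteq> [] \<and> P (last u'))" for u u' :: "'a list"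
    unfolding lquot_def using last_app[of u] last_app[of u'] that by auto
qed simp

lemma regular_finite:
  assumes "finite L" shows "regular L"
proof -
  define P where "P = (\<Union>w\<in>L. (\<lambda>i. take i w) ` {..length w})"
  have "finite P" using assms by (simp add: P_def)
  have "range (lquot L) \<subseteq> insert {} (lquot L ` P)"
  proof
    fix X assume "X \<in> range (lquot L)"
    then obtain u where u: "X = lquot L u" by auto
    show "X \<in> insert {} (lquot L ` P)"
    proof (cases "X = {}")
      case False
      then obtain v where "u @ v \<in> L" using u by (auto simp: lquot_def)
      then have "u \<in> P" unfolding P_def
        by (auto intro!: bexI[of _ "u @ v"] image_eqI[of _ _ "length u"])
      then show ?thesis using u by auto
    qed simp
  qed
  then show ?thesis using \<open>finite P\<close> by (simp add: regular_def finite_subset)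
qed

lemma regular_rev_image:
  assumes "regular L" shows "regular (rev ` L)"
proof -
  define f where "f z = {X \<in> range (lquot L). rev z \<in> X}" for z
  have "range f \<subseteq> Pow (range (lquot L))" by (auto simp: f_def)
  then have "finite (range f)" using assms by (meson finite_Pow_iff finite_subset regular_def)
  then show ?thesis
  proof (rule regularI_append)
    fix u u' v assume f_eq: "f u = f u'" and "u @ v \<in> rev ` L"
    then have "rev v @ rev u \<in> L" by (auto simp: image_iff) (metis rev_append rev_rev_ident)
    then have "lquot L (rev v) \<in> f u" by (simp add: f_def lquot_def)
    then have "lquot L (rev v) \<in> f u'" using f_eq by simp
    then show "u' @ v \<in> rev ` L" unfolding f_def lquot_def
      by simp (metis rev_append rev_rev_ident rev_image_eqI)
  qed
qed

lemma regular_vimage_concat_map: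
  assumes "regular L" shows "regular {x. concat (map g x) \<in> L}"
  by (rule regular_lquot_transfer[OF assms, where G="\<lambda>X. {v. concat (map g v) \<in> X}"
        and h="\<lambda>u. concat (map g u)"]) (auto simp: lquot_def)

lemma regular_vimage_map: "regular L \<Longrightarrow> regular {x. map g x \<in> L}"
  using regular_vimage_concat_map[of L "\<lambda>a. [g a]"] by simp

lemma regular_image_map:
  assumes "regular L" shows "regular (map g ` L)"
proof -
  define f where "f u = {lquot L u' | u'. map g u' = u}" for u
  have "range f \<subseteq> Pow (range (lquot L))" by (auto simp: f_def)
  then have "finite (range f)" using assms by (meson finite_Pow_iff finite_subset regular_def)
  then show ?thesis
  proof (rule regularI_append)
    fix u u' v assume f_eq: "f u = f u'" and "u @ v \<in> map g ` L"
    then obtain x1 x2 where x: "x1 @ x2 \<in> L" "map g x1 = u" "map g x2 = v"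
      by (auto simp: image_iff) (metis map_eq_append_conv)
    then have "lquot L x1 \<in> f u'" using f_eq by (auto simp: f_def)
    then obtain y1 where y1: "map g y1 = u'" "lquot L y1 = lquot L x1" by (auto simp: f_def)
    then have "y1 @ x2 \<in> L" using x(1) by (auto simp: lquot_def)
    then show "u' @ v \<in> map g ` L" using y1 x by (metis map_append rev_image_eqI)
  qed
qed

lemma regular_strip_padding:
  assumes "regular L" shows "regular {x. \<exists>n. x @ replicate n z \<in> L}"
  by (rule regular_lquot_transfer[OF assms, where G="\<lambda>X. {v. \<exists>n. v @ replicate n z \<in> X}" and h=id])
     (auto simp: lquot_def)

definition conc :: "'x list set \<Rightarrow> 'x list set \<Rightarrow> 'x list set" (infixr "@@" 65) where
  "L1 @@ L2 = {x @ y | x y. x \<in> L1 \<and> y \<in> L2}"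

lemma regular_conc:
  assumes "regular L1" "regular L2" shows "regular (L1 @@ L2)"
proof -
  define f where "f u = (lquot L1 u, {lquot L2 u2 | y u2. u = y @ u2 \<and> y \<in> L1})" for u
  have "range f \<subseteq> range (lquot L1) \<times> Pow (range (lquot L2))" by (auto simp: f_def)
  then have "finite (range f)"
    using assms by (meson finite_Pow_iff finite_SigmaI finite_subset regular_def)
  then show ?thesis
  proof (rule regularI_append)
    fix u u' v assume f_eq: "f u = f u'" and "u @ v \<in> L1 @@ L2"
    then obtain x y where xy: "u @ v = x @ y" "x \<in> L1" "y \<in> L2" by (auto simp: conc_def)
    then obtain m where "u = x @ m \<and> m @ v = y \<or> u @ m = x \<and> v = m @ y"
      by (auto simp: append_eq_append_conv2)
    then show "u' @ v \<in> L1 @@ L2"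
    proof
      \<comment> \<open>the cut between the two factors lies inside \<open>u\<close>\<close>
      assume m: "u = x @ m \<and> m @ v = y"
      then have "lquot L2 m \<in> snd (f u)" using xy by (auto simp: f_def)
      then have "lquot L2 m \<in> snd (f u')" using f_eq by simp
      then obtain y' u2 where y': "u' = y' @ u2" "y' \<in> L1" "lquot L2 u2 = lquot L2 m"
        by (auto simp: f_def)
      have "v \<in> lquot L2 u2" using m xy y'(3) by (simp add: lquot_def)
      then have "u2 @ v \<in> L2" by (simp add: lquot_def)
      then show ?thesis using y' by (auto simp: conc_def)
    next
      assume m: "u @ m = x \<and> v = m @ y"
      then have "m \<in> lquot L1 u" using xy by (simp add: lquot_def)
      then have "m \<in> lquot L1 u'" using f_eq by (simp add: f_def)
      then have "u' @ m \<in> L1" by (simp add: lquot_def)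
      then show ?thesis using m xy unfolding conc_def
        by (intro CollectI exI[of _ "u' @ m"] exI[of _ y]) auto
    qed
  qed
qed

section \<open>Morphic images of regular languages are rational\<close>

definition pair_hom :: "('x \<Rightarrow> 'b list \<times> 'c list) \<Rightarrow> 'x list \<Rightarrow> 'b list \<times> 'c list" where
  "pair_hom h x = (concat (map (fst \<circ> h) x), concat (map (snd \<circ> h) x))"

lemma pair_hom_Nil [simp]: "pair_hom h [] = ([], [])"
  by (simp add: pair_hom_def)

lemma pair_hom_append [simp]:
  "pair_hom h (x @ y) =
    (fst (pair_hom h x) @ fst (pair_hom h y), snd (pair_hom h x) @ snd (pair_hom h y))"
  by (simp add: pair_hom_def)

inductive_set star :: "'x list set \<Rightarrow> 'x list set" for M where
  star_Nil: "[] \<in> star M"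
| star_append: "x \<in> M \<Longrightarrow> y \<in> star M \<Longrightarrow> x @ y \<in> star M"

lemma pair_hom_conc: "pair_hom h ` (M1 @@ M2) = rel_prod (pair_hom h ` M1) (pair_hom h ` M2)"
proof
  show "pair_hom h ` (M1 @@ M2) \<subseteq> rel_prod (pair_hom h ` M1) (pair_hom h ` M2)"
    by (auto simp: conc_def rel_prod_def) (metis prod.collapse imageI)
  show "rel_prod (pair_hom h ` M1) (pair_hom h ` M2) \<subseteq> pair_hom h ` (M1 @@ M2)"
  proof
    fix p assume "p \<in> rel_prod (pair_hom h ` M1) (pair_hom h ` M2)"
    then obtain x y where "x \<in> M1" "y \<in> M2"
      "p = (fst (pair_hom h x) @ fst (pair_hom h y), snd (pair_hom h x) @ snd (pair_hom h y))"
      by (auto simp: rel_prod_def) (metis fst_conv snd_conv)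
    then show "p \<in> pair_hom h ` (M1 @@ M2)"
      by (auto simp: conc_def intro!: image_eqI[of _ _ "x @ y"])
  qed
qed

lemma pair_hom_star: "pair_hom h ` star M = rel_star (pair_hom h ` M)"
proof
  show "pair_hom h ` star M \<subseteq> rel_star (pair_hom h ` M)"
  proof
    fix p assume "p \<in> pair_hom h ` star M"
    then obtain x where x: "x \<in> star M" "p = pair_hom h x" by auto
    from x(1) have "pair_hom h x \<in> rel_star (pair_hom h ` M)"
    proof induction
      case star_Nil
      then show ?case by (simp add: rel_star_Nil)
    next
      case (star_append x y)
      then show ?case
        using rel_star_step[of "fst (pair_hom h x)" "snd (pair_hom h x)" "pair_hom h ` M"
            "fst (pair_hom h y)" "snd (pair_hom h y)"]
        by simp
    qed
    then show "p \<in> rel_star (pair_hom h ` M)" using x by simp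
  qed
  show "rel_star (pair_hom h ` M) \<subseteq> pair_hom h ` star M"
  proof (rule subrelI)
    fix u v assume "(u, v) \<in> rel_star (pair_hom h ` M)"
    then show "(u, v) \<in> pair_hom h ` star M"
    proof induction
      case rel_star_Nil
      then show ?case by (metis pair_hom_Nil image_eqI star_Nil)
    next
      case (rel_star_step u v u' v')
      then obtain x y where "x \<in> M" "(u, v) = pair_hom h x" "y \<in> star M" "(u', v') = pair_hom h y"
        by auto
      then show ?case
        by (auto intro!: image_eqI[of _ _ "x @ y"] star_append) (metis fst_conv snd_conv)+
    qed
  qed
qed

lemma rational_UN:
  assumes "finite F" "\<And>i. i \<in> F \<Longrightarrow> rational (G i)"
  shows "rational (\<Union>i\<in>F. G i)"
  using assms by (induction F rule: finite_induct) (auto intro: rat_finite rat_union)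

text \<open>The McNaughton--Yamada construction, with the left quotients of a language as
  states.\<close>

definition lquot_paths :: "'x set \<Rightarrow> 'x list set set \<Rightarrow> 'x list set \<Rightarrow> 'x list set \<Rightarrow> 'x list set" where
  "lquot_paths \<Sigma> K X Y = {x. set x \<subseteq> \<Sigma> \<and> lquot X x = Y \<and>
     (\<forall>i. 0 < i \<and> i < length x \<longrightarrow> lquot X (take i x) \<in> K)}"

lemma lquot_paths_empty:
  "lquot_paths \<Sigma> {} X Y = {x. x = [] \<and> X = Y} \<union> {[a] | a. a \<in> \<Sigma> \<and> lquot X [a] = Y}"
proof -
  have "x \<in> {x. x = [] \<and> X = Y} \<union> {[a] | a. a \<in> \<Sigma> \<and> lquot X [a] = Y}"
    if x: "x \<in> lquot_paths \<Sigma> {} X Y" for x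
  proof -
    have "length x < 2"
    proof (rule ccontr)
      assume "\<not> length x < 2"
      then have "0 < (1::nat)" "1 < length x" by auto
      then show False using x unfolding lquot_paths_def by blast
    qed
    then show ?thesis using x unfolding lquot_paths_def by (cases x) (auto simp: less_2_cases_iff)
  qed
  then show ?thesis by (auto simp: lquot_paths_def)
qed

lemma lquot_paths_mono: "K \<subseteq> K' \<Longrightarrow> lquot_paths \<Sigma> K X Y \<subseteq> lquot_paths \<Sigma> K' X Y"
  by (auto simp: lquot_paths_def)

lemma lquot_paths_append:
  assumes "x \<in> lquot_paths \<Sigma> K X Z" "y \<in> lquot_paths \<Sigma> K Z Y" "Z \<in> K"
  shows "x @ y \<in> lquot_paths \<Sigma> K X Y"
proof -
  have qx: "lquot X x = Z" using assms(1) by (simp add: lquot_paths_def)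
  have "lquot X (take i (x @ y)) \<in> K" if "0 < i" "i < length (x @ y)" for i
  proof (cases "i < length x")
    case True
    then show ?thesis using assms(1) that by (simp add: lquot_paths_def)
  next
    case False
    then have "lquot X (take i (x @ y)) = lquot Z (take (i - length x) y)"
      using qx by (simp add: lquot_append[symmetric])
    then show ?thesis
      using assms(2,3) that False by (cases "i = length x") (auto simp: lquot_paths_def)
  qed
  then show ?thesis using assms by (auto simp: lquot_paths_def lquot_append[symmetric])
qed

lemma lquot_paths_take_drop:
  assumes "x \<in> lquot_paths \<Sigma> K X Y" "0 < i" "i < length x"
  shows "take i x \<in> lquot_paths \<Sigma> K X (lquot X (take i x))"
    and "drop i x \<in> lquot_paths \<Sigma> K (lquot X (take i x)) Y"
proof -
  show "take i x \<in> lquot_paths \<Sigma> K X (lquot X (take i x))"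
    using assms by (auto simp: lquot_paths_def min_def dest: in_set_takeD)
  have "lquot (lquot X (take i x)) (take j (drop i x)) \<in> K" if "0 < j" "j < length (drop i x)" for j
    using assms that by (simp add: lquot_append lquot_paths_def take_add[symmetric])
  then show "drop i x \<in> lquot_paths \<Sigma> K (lquot X (take i x)) Y"
    using assms(1) by (auto simp: lquot_append lquot_paths_def dest: in_set_dropD)
qed

lemma lquot_paths_first_visit:
  assumes z: "z \<in> lquot_paths \<Sigma> (insert k K) X Y"
    and visit: "\<exists>i. 0 < i \<and> i < length z \<and> lquot X (take i z) = k"
  obtains x y where "z = x @ y" "x \<noteq> []" "y \<noteq> []"
    "x \<in> lquot_paths \<Sigma> K X k" "y \<in> lquot_paths \<Sigma> (insert k K) k Y"
proof -
  define i where "i = (LEAST i. 0 < i \<and> i < length z \<and> lquot X (take i z) = k)"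
  have i: "0 < i" "i < length z" "lquot X (take i z) = k"
    using LeastI_ex[OF visit] unfolding i_def by auto
  have before: "lquot X (take j z) \<noteq> k" if "0 < j" "j < i" for j
  proof -
    have "\<not> (0 < j \<and> j < length z \<and> lquot X (take j z) = k)"
      using that(2) unfolding i_def by (rule not_less_Least)
    then show ?thesis using that i(2) by auto
  qed
  have "take i z \<in> lquot_paths \<Sigma> K X k"
    using lquot_paths_take_drop(1)[OF z i(1,2)] z i before
    by (fastforce simp: lquot_paths_def)
  moreover have "drop i z \<in> lquot_paths \<Sigma> (insert k K) k Y"
    using lquot_paths_take_drop(2)[OF z i(1,2)] i(3) by simp
  ultimately show thesis
    by (rule that[of "take i z" "drop i z", rotated 3]) (use i in auto)
qed

lemma lquot_paths_loop:
  assumes "k \<notin> K"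
  shows "z \<in> lquot_paths \<Sigma> (insert k K) k Y \<Longrightarrow>
    z \<in> star (lquot_paths \<Sigma> K k k) @@ lquot_paths \<Sigma> K k Y"
proof (induction z rule: length_induct)
  case (1 z)
  show ?case
  proof (cases "\<exists>i. 0 < i \<and> i < length z \<and> lquot k (take i z) = k")
    case False
    then have "z \<in> lquot_paths \<Sigma> K k Y" using 1(2) by (auto simp: lquot_paths_def)
    then show ?thesis unfolding conc_def using star_Nil by fastforce
  next
    case True
    with 1(2) obtain x y where xy: "z = x @ y" "x \<noteq> []"
      "x \<in> lquot_paths \<Sigma> K k k" "y \<in> lquot_paths \<Sigma> (insert k K) k Y"
      by (rule lquot_paths_first_visit)
    then have "y \<in> star (lquot_paths \<Sigma> K k k) @@ lquot_paths \<Sigma> K k Y"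
      using 1(1) by simp
    then obtain y1 y2 where "y = y1 @ y2" "y1 \<in> star (lquot_paths \<Sigma> K k k)"
      "y2 \<in> lquot_paths \<Sigma> K k Y" by (auto simp: conc_def)
    then show ?thesis using xy unfolding conc_def
      by (intro CollectI exI[of _ "x @ y1"] exI[of _ y2]) (auto intro: star_append)
  qed
qed

lemma lquot_paths_star:
  "y \<in> star (lquot_paths \<Sigma> K k k) \<Longrightarrow> y \<in> lquot_paths \<Sigma> (insert k K) k k"
proof (induction rule: star.induct)
  case star_Nil
  then show ?case by (simp add: lquot_paths_def)
next
  case (star_append x y)
  then show ?case
    using lquot_paths_mono[OF subset_insertI] by (blast intro: lquot_paths_append)
qed

lemma lquot_paths_insert:
  assumes "k \<notin> K"
  shows "lquot_paths \<Sigma> (insert k K) X Y = lquot_paths \<Sigma> K X Y \<union>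
    (lquot_paths \<Sigma> K X k @@ star (lquot_paths \<Sigma> K k k) @@ lquot_paths \<Sigma> K k Y)"
proof (intro equalityI subsetI)
  fix z assume z: "z \<in> lquot_paths \<Sigma> (insert k K) X Y"
  show "z \<in> lquot_paths \<Sigma> K X Y \<union>
    (lquot_paths \<Sigma> K X k @@ star (lquot_paths \<Sigma> K k k) @@ lquot_paths \<Sigma> K k Y)"
  proof (cases "\<exists>i. 0 < i \<and> i < length z \<and> lquot X (take i z) = k")
    case False
    then show ?thesis using z by (auto simp: lquot_paths_def)
  next
    case True
    with z obtain x y where "z = x @ y"
      "x \<in> lquot_paths \<Sigma> K X k" "y \<in> lquot_paths \<Sigma> (insert k K) k Y"
      by (rule lquot_paths_first_visit)
    moreover from this(3) obtain y1 y2 where "y = y1 @ y2"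
      "y1 \<in> star (lquot_paths \<Sigma> K k k)" "y2 \<in> lquot_paths \<Sigma> K k Y"
      using lquot_paths_loop[OF assms, of y \<Sigma> Y] unfolding conc_def by blast
    ultimately show ?thesis unfolding conc_def by blast
  qed
next
  fix z assume "z \<in> lquot_paths \<Sigma> K X Y \<union>
    (lquot_paths \<Sigma> K X k @@ star (lquot_paths \<Sigma> K k k) @@ lquot_paths \<Sigma> K k Y)"
  then show "z \<in> lquot_paths \<Sigma> (insert k K) X Y"
  proof
    assume "z \<in> lquot_paths \<Sigma> K X Y"
    then show ?thesis using lquot_paths_mono[OF subset_insertI] by blast
  next
    assume "z \<in> lquot_paths \<Sigma> K X k @@ star (lquot_paths \<Sigma> K k k) @@ lquot_paths \<Sigma> K k Y"
    then obtain x y w where z: "z = x @ y @ w" "x \<in> lquot_paths \<Sigma> K X k"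
      "y \<in> star (lquot_paths \<Sigma> K k k)" "w \<in> lquot_paths \<Sigma> K k Y"
      by (auto simp: conc_def)
    have "x \<in> lquot_paths \<Sigma> (insert k K) X k" "w \<in> lquot_paths \<Sigma> (insert k K) k Y"
      using z(2,4) lquot_paths_mono[OF subset_insertI] by blast+
    moreover have "y \<in> lquot_paths \<Sigma> (insert k K) k k" using z(3) by (rule lquot_paths_star)
    ultimately show ?thesis unfolding z(1) by (blast intro: lquot_paths_append)
  qed
qed

lemma rational_lquot_paths:
  assumes "finite \<Sigma>" "finite K"
  shows "rational (pair_hom h ` lquot_paths \<Sigma> K X Y)"
  using assms(2)
proof (induction K arbitrary: X Y rule: finite_induct)
  case empty
  have "finite (lquot_paths \<Sigma> {} X Y)"
    unfolding lquot_paths_empty using assms(1) by (auto intro: finite_subset[of _ "(\<lambda>a. [a]) ` \<Sigma>"])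
  then show ?case by (intro rat_finite finite_imageI)
next
  case (insert k K)
  show ?case unfolding lquot_paths_insert[OF insert(2)] image_Un pair_hom_conc pair_hom_star
    by (intro rational.intros insert.IH)
qed

lemma rational_image_regular:
  assumes "regular L" "finite \<Sigma>" "L \<subseteq> lists \<Sigma>"
  shows "rational (pair_hom h ` L)"
proof -
  let ?Q = "range (lquot L)"
  have "L = (\<Union>Y\<in>{Y\<in>?Q. [] \<in> Y}. lquot_paths \<Sigma> ?Q L Y)"
  proof (intro equalityI subsetI)
    fix x assume "x \<in> L"
    then have "x \<in> lquot_paths \<Sigma> ?Q L (lquot L x)" "[] \<in> lquot L x"
      using assms(3) by (auto simp: lquot_paths_def lquot_def)
    then show "x \<in> (\<Union>Y\<in>{Y\<in>?Q. [] \<in> Y}. lquot_paths \<Sigma> ?Q L Y)" by blast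
  qed (auto simp: lquot_paths_def lquot_def)
  then have "pair_hom h ` L = (\<Union>Y\<in>{Y\<in>?Q. [] \<in> Y}. pair_hom h ` lquot_paths \<Sigma> ?Q L Y)"
    by blast
  also have "rational \<dots>"
    using assms(1,2) unfolding regular_def by (intro rational_UN rational_lquot_paths) auto
  finally show ?thesis .
qed

section \<open>Synchronous relations\<close>

text \<open>A relation is synchronous if its convolution language is regular.\<close>

fun conv :: "'a list \<Rightarrow> 'b list \<Rightarrow> ('a option \<times> 'b option) list" where
  "conv (a # u) (b # v) = (Some a, Some b) # conv u v"
| "conv (a # u) [] = (Some a, None) # conv u []"
| "conv [] (b # v) = (None, Some b) # conv [] v"
| "conv [] [] = []"

fun list_of_option :: "'a option \<Rightarrow> 'a list" where
  "list_of_option None = []"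
| "list_of_option (Some a) = [a]"

definition somes :: "'a option list \<Rightarrow> 'a list" where
  "somes xs = concat (map list_of_option xs)"

lemma somes_simps [simp]:
  "somes [] = []" "somes (None # xs) = somes xs" "somes (Some a # xs) = a # somes xs"
  "somes (xs @ ys) = somes xs @ somes ys"
  by (simp_all add: somes_def)

lemma somes_map_Some [simp]: "somes (map Some xs) = xs"
  by (induction xs) simp_all

lemma somes_replicate_None [simp]: "somes (replicate n None) = []"
  by (induction n) simp_all

lemma somes_rev: "somes (rev xs) = rev (somes xs)"
proof -
  have "rev (list_of_option a) = list_of_option a" for a :: "'a option"
    by (cases a) simp_all
  then show ?thesis by (induction xs) (simp_all add: somes_def)
qed

lemma somes_conv [simp]: "somes (map fst (conv u v)) = u" "somes (map snd (conv u v)) = v"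
  by (induction u v rule: conv.induct) simp_all

lemma conv_inj: "conv u v = conv u' v' \<Longrightarrow> u = u' \<and> v = v'"
  by (metis somes_conv)

lemma map_fst_conv: "map fst (conv u v) = map Some u @ replicate (length v - length u) None"
  by (induction u v rule: conv.induct) simp_all

lemma conv_swap: "conv v u = map prod.swap (conv u v)"
  by (induction u v rule: conv.induct) simp_all

lemma conv_not_None_None: "r \<in> set (conv u v) \<Longrightarrow> r \<noteq> (None, None)"
  by (induction u v rule: conv.induct) auto

definition conv_lang :: "('a list \<times> 'b list) set \<Rightarrow> ('a option \<times> 'b option) list set" where
  "conv_lang R = (\<lambda>(u, v). conv u v) ` R"

lemma conv_in_conv_lang [simp]: "conv u v \<in> conv_lang R \<longleftrightarrow> (u, v) \<in> R"
  by (auto simp: conv_lang_def dest: conv_inj)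

lemma conv_lang_Int: "conv_lang (R \<inter> S) = conv_lang R \<inter> conv_lang S"
  by (auto simp: conv_lang_def dest: conv_inj)

lemma conv_lang_Un: "conv_lang (R \<union> S) = conv_lang R \<union> conv_lang S"
  by (auto simp: conv_lang_def)

lemma conv_lang_Diff: "conv_lang (R - S) = conv_lang R - conv_lang S"
  by (auto simp: conv_lang_def dest: conv_inj)

definition rows_both :: "('a option \<times> 'b option) set" where
  "rows_both = {(Some a, Some b) | a b. True}"

definition rows_left :: "('a option \<times> 'b option) set" where
  "rows_left = {(Some a, None) | a. True}"

definition rows_right :: "('a option \<times> 'b option) set" where
  "rows_right = {(None, Some b) | b. True}"

lemma conv_in_lists_rows_both_iff: "conv u v \<in> lists rows_both \<longleftrightarrow> length u = length v"
  by (induction u v rule: conv.induct) (auto simp: rows_both_def)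

lemma conv_Nil_right_in_lists: "conv u [] \<in> lists rows_left"
  by (induction u) (auto simp: rows_left_def)

lemma conv_Nil_left_in_lists: "conv [] v \<in> lists rows_right"
  by (induction v) (auto simp: rows_right_def)

lemma conv_in_conv_shape: "conv u v \<in> lists rows_both @@ (lists rows_left \<union> lists rows_right)"
proof (induction u v rule: conv.induct)
  case (1 a u b v)
  then obtain x y where "conv u v = x @ y" "x \<in> lists rows_both"
    "y \<in> lists rows_left \<union> lists rows_right"
    by (auto simp: conc_def)
  then show ?case unfolding conc_def
    by (intro CollectI exI[of _ "(Some a, Some b) # x"] exI[of _ y]) (auto simp: rows_both_def)
next
  case (2 a u)
  then show ?case unfolding conc_def
    by (intro CollectI exI[of _ "[]"] exI[of _ "conv (a # u) []"])
       (simp add: conv_Nil_right_in_lists del: conv.simps)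
next
  case (3 b v)
  then show ?case unfolding conc_def
    by (intro CollectI exI[of _ "[]"] exI[of _ "conv [] (b # v)"])
       (simp add: conv_Nil_left_in_lists del: conv.simps)
next
  case 4
  then show ?case unfolding conc_def by (intro CollectI exI[of _ "[]"]) simp
qed

lemma conv_append_left:
  "length u1 = length v1 \<Longrightarrow> conv u1 v1 @ conv u2 [] = conv (u1 @ u2) v1"
  by (induction u1 v1 rule: list_induct2) simp_all

lemma conv_append_right:
  "length u1 = length v1 \<Longrightarrow> conv u1 v1 @ conv [] v2 = conv u1 (v1 @ v2)"
  by (induction u1 v1 rule: list_induct2) simp_all

lemma conv_lang_UNIV: "conv_lang UNIV = lists rows_both @@ (lists rows_left \<union> lists rows_right)"
proof (intro equalityI subsetI)
  fix x assume "x \<in> conv_lang UNIV"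
  then show "x \<in> lists rows_both @@ (lists rows_left \<union> lists rows_right)"
    using conv_in_conv_shape by (auto simp: conv_lang_def)
next
  fix z assume "z \<in> lists rows_both @@ (lists rows_left \<union> lists rows_right)"
  then obtain x y where xy: "z = x @ y" "x \<in> lists rows_both"
    "y \<in> lists rows_left \<or> y \<in> lists rows_right"
    by (auto simp: conc_def)
  have x: "x = conv (somes (map fst x)) (somes (map snd x))"
    "length (somes (map fst x)) = length (somes (map snd x))"
    using xy(2) by (induction x) (auto simp: rows_both_def)
  from xy(3) show "z \<in> conv_lang UNIV"
  proof
    assume "y \<in> lists rows_left"
    then have "y = conv (somes (map fst y)) []" by (induction y) (auto simp: rows_left_def)
    then show ?thesis using xy(1) x conv_append_left by (metis UNIV_I conv_in_conv_lang)
  next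
    assume "y \<in> lists rows_right"
    then have "y = conv [] (somes (map snd y))" by (induction y) (auto simp: rows_right_def)
    then show ?thesis using xy(1) x conv_append_right by (metis UNIV_I conv_in_conv_lang)
  qed
qed

lemma regular_conv_lang_UNIV: "regular (conv_lang UNIV)"
  unfolding conv_lang_UNIV by (intro regular_conc regular_Un regular_lists)

lemma regular_conv_lang_Int:
  "regular (conv_lang R) \<Longrightarrow> regular (conv_lang S) \<Longrightarrow> regular (conv_lang (R \<inter> S))"
  unfolding conv_lang_Int by (rule regular_Int)

lemma regular_conv_lang_Un:
  "regular (conv_lang R) \<Longrightarrow> regular (conv_lang S) \<Longrightarrow> regular (conv_lang (R \<union> S))"
  unfolding conv_lang_Un by (rule regular_Un)

lemma regular_conv_lang_Diff:
  "regular (conv_lang R) \<Longrightarrow> regular (conv_lang S) \<Longrightarrow> regular (conv_lang (R - S))"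
  unfolding conv_lang_Diff by (rule regular_Diff)

lemma regular_conv_lang_Times:
  assumes "regular L1" "regular L2" shows "regular (conv_lang (L1 \<times> L2))"
proof -
  have eq: "conv_lang (L1 \<times> L2) =
      conv_lang UNIV \<inter> {x. somes (map fst x) \<in> L1} \<inter> {x. somes (map snd x) \<in> L2}"
    by (auto simp: conv_lang_def)
  have somes_map: "somes (map f x) = concat (map (\<lambda>r. list_of_option (f r)) x)" for f x
    by (simp add: somes_def comp_def)
  show ?thesis unfolding eq somes_map
    by (intro regular_Int regular_conv_lang_UNIV regular_vimage_concat_map assms)
qed

lemma regular_conv_lang_Id: "regular (conv_lang Id)"
proof -
  have eq: "conv_lang Id = lists {(Some a, Some a) | a. True}"
  proof (intro equalityI subsetI)
    fix x assume "x \<in> conv_lang Id"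
    then obtain u where "x = conv u u" by (auto simp: conv_lang_def)
    then show "x \<in> lists {(Some a, Some a) | a. True}" by (induction u arbitrary: x) auto
  next
    fix x assume "x \<in> lists {(Some a, Some a) | a. True}"
    then have "x = conv (somes (map fst x)) (somes (map fst x))" by (induction x) auto
    then show "x \<in> conv_lang Id" by (metis conv_in_conv_lang IdI)
  qed
  show ?thesis unfolding eq by (rule regular_lists)
qed

lemma regular_Domain:
  assumes "regular (conv_lang R)" shows "regular (Domain R)"
proof -
  have eq: "Domain R = {u. map Some u \<in> {x. \<exists>n. x @ replicate n None \<in> map fst ` conv_lang R}}"
  proof (intro equalityI subsetI)
    fix u assume "u \<in> Domain R"
    then obtain v where "(u, v) \<in> R" by blast
    then show "u \<in> {u. map Some u \<in> {x. \<exists>n. x @ replicate n None \<in> map fst ` conv_lang R}}"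
      by (auto simp: conv_lang_def map_fst_conv image_iff
          intro!: exI[of _ "length v - length u"] bexI[of _ "(u, v)"])
  next
    fix u assume "u \<in> {u. map Some u \<in> {x. \<exists>n. x @ replicate n None \<in> map fst ` conv_lang R}}"
    then obtain n u' v where "map Some u @ replicate n None = map fst (conv u' v)" "(u', v) \<in> R"
      by (auto simp: conv_lang_def)
    then have "somes (map Some u @ replicate n None) = somes (map fst (conv u' v))" by simp
    then show "u \<in> Domain R" using \<open>(u', v) \<in> R\<close> by force
  qed
  show ?thesis unfolding eq
    by (intro regular_vimage_map regular_strip_padding regular_image_map assms)
qed

section \<open>Runs of visibly pushdown automata\<close>

lemma run_Nil [simp]: "run A c [] = c"
  by (simp add: run_def)

lemma run_Cons [simp]: "run A c (a # w) = run A (step A c a) w"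
  by (simp add: run_def)

lemma run_append: "run A c (u @ v) = run A (run A c u) v"
  by (simp add: run_def)

lemma run_snoc: "run A c (w @ [a]) = step A (run A c w) a"
  by (simp add: run_def)

lemma lang_append: "u @ v \<in> lang A c \<longleftrightarrow> v \<in> lang A (run A c u)"
  by (simp add: lang_def run_append)

lemma lang_run: "lang A (run A c u) = {v. u @ v \<in> lang A c}"
  by (auto simp: lang_append)

definition letter_delta :: "('q, 'g, 'a) vpa \<Rightarrow> 'a \<Rightarrow> int" where
  "letter_delta A a = (case kind A a of KCall \<Rightarrow> 1 | KRet \<Rightarrow> -1 | KInt \<Rightarrow> 0)"

definition stack_delta :: "('q, 'g, 'a) vpa \<Rightarrow> 'a list \<Rightarrow> int" where
  "stack_delta A w = sum_list (map (letter_delta A) w)"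

lemma stack_delta_Nil [simp]: "stack_delta A [] = 0"
  by (simp add: stack_delta_def)

lemma stack_delta_snoc: "stack_delta A (w @ [a]) = stack_delta A w + letter_delta A a"
  by (simp add: stack_delta_def)

lemma stack_delta_take_Suc:
  "i < length w \<Longrightarrow>
    stack_delta A (take (Suc i) w) = stack_delta A (take i w) + letter_delta A (w ! i)"
  by (simp add: take_Suc_conv_app_nth stack_delta_snoc)

definition proper_stack :: "('q, 'g, 'a) vpa \<Rightarrow> 'g list \<Rightarrow> bool" where
  "proper_stack A s \<longleftrightarrow> s \<noteq> [] \<and> hd s = bot A \<and> bot A \<notin> set (tl s)"

lemma step_prefix_stack:
  assumes "s \<noteq> []" "hd s = bot A"
  shows "step A (pre @ s, p) a = (pre @ fst (step A (s, p) a), snd (step A (s, p) a))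
     \<and> fst (step A (s, p) a) \<noteq> [] \<and> hd (fst (step A (s, p) a)) = bot A"
proof (cases "kind A a")
  case KRet
  show ?thesis
  proof (cases "last s = bot A")
    case False
    obtain x s' where s0: "s = x # s'" using assms by (cases s) auto
    have "s' \<noteq> []" using False assms s0 by auto
    note s = s0 this
    then have "butlast (pre @ s) = pre @ butlast s" by (simp add: butlast_append)
    moreover have "butlast s \<noteq> []" "hd (butlast s) = bot A" using s assms by auto
    ultimately show ?thesis using KRet False assms by (simp add: last_append)
  qed (use KRet assms in simp)
qed (use assms in \<open>simp_all add: hd_append\<close>)

lemma run_prefix_stack:
  assumes "s \<noteq> []" "hd s = bot A"
  shows "run A (pre @ s, p) w = (pre @ fst (run A (s, p) w), snd (run A (s, p) w))
     \<and> fst (run A (s, p) w) \<noteq> [] \<and> hd (fst (run A (s, p) w)) = bot A"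
  using assms
proof (induction w arbitrary: s p)
  case Nil
  then show ?case by simp
next
  case (Cons a w)
  obtain s1 p1 where st: "step A (s, p) a = (s1, p1)" by fastforce
  have 1: "step A (pre @ s, p) a = (pre @ s1, p1)" "s1 \<noteq> []" "hd s1 = bot A"
    using step_prefix_stack[OF Cons(2,3), of pre p a] st by auto
  show ?case using Cons(1)[OF 1(2,3), of p1] 1(1) st by simp
qed

lemma lang_prefix_stack:
  assumes "s \<noteq> []" "hd s = bot A"
  shows "lang A (pre @ s, p) = lang A (s, p)"
  using run_prefix_stack[OF assms] by (simp add: lang_def)

lemma lang_bot_stack:
  assumes "B \<noteq> []" "set B \<subseteq> {bot A}"
  shows "lang A (B, p) = lang A ([bot A], p)"
proof -
  have "last B = bot A" using assms by (auto dest: last_in_set)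
  then have "B = butlast B @ [bot A]" using assms(1) by (metis append_butlast_last_id)
  then show ?thesis using lang_prefix_stack[of "[bot A]" A "butlast B" p] by simp
qed

context
  fixes A :: "('q, 'g, 'a) vpa"
  assumes wf: "wf_vpa A"
begin

lemma wf_push: "kind A a = KCall \<Longrightarrow> fst (dc A p a) \<noteq> bot A"
  using wf by (simp add: wf_vpa_def)

lemma step_above:
  assumes "T \<noteq> []" "bot A \<notin> set T"
  shows "step A (B @ T, p) a = (B @ fst (step A (T, p) a), snd (step A (T, p) a))
     \<and> int (length (fst (step A (T, p) a))) = int (length T) + letter_delta A a
     \<and> bot A \<notin> set (fst (step A (T, p) a))"
proof -
  have lT: "last T \<noteq> bot A" using assms by (metis last_in_set)
  show ?thesis
  proof (cases "kind A a")
    case KCall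
    then show ?thesis using wf_push[OF KCall, of p] assms by (auto simp: letter_delta_def)
  next
    case KRet
    have "length T \<ge> 1" using assms by (cases T) auto
    then show ?thesis using assms lT KRet
      by (auto simp: butlast_append last_append of_nat_diff letter_delta_def dest: in_set_butlastD)
  next
    case KInt
    then show ?thesis using assms by (simp add: letter_delta_def)
  qed
qed

lemma run_above:
  assumes "bot A \<notin> set T" "\<forall>j<length w. int (length T) + stack_delta A (take j w) > 0"
  shows "run A (B @ T, q) w = (B @ fst (run A (T, q) w), snd (run A (T, q) w))
     \<and> int (length (fst (run A (T, q) w))) = int (length T) + stack_delta A w
     \<and> bot A \<notin> set (fst (run A (T, q) w))"
  using assms(2)
proof (induction w rule: rev_induct)
  case Nil
  then show ?case using assms(1) by simp
next
  case (snoc a w)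
  have IH: "run A (B @ T, q) w = (B @ fst (run A (T, q) w), snd (run A (T, q) w))"
    "int (length (fst (run A (T, q) w))) = int (length T) + stack_delta A w"
    "bot A \<notin> set (fst (run A (T, q) w))"
    using snoc(1) snoc(2) by (auto simp: nth_append)
  have "int (length T) + stack_delta A (take (length w) (w @ [a])) > 0"
    using snoc(2)[rule_format, of "length w"] by simp
  then have ne: "fst (run A (T, q) w) \<noteq> []" using IH(2) by auto
  show ?case using step_above[OF ne IH(3), of B "snd (run A (T, q) w)" a] IH
    by (simp add: run_snoc stack_delta_snoc)
qed

lemma run_above_while_longer:
  assumes "bot A \<notin> set T" "T \<noteq> []"
    and "\<forall>j\<le>length w. length (fst (run A (B @ T, q) (take j w))) > length B"
  shows "run A (B @ T, q) w = (B @ fst (run A (T, q) w), snd (run A (T, q) w))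
     \<and> int (length (fst (run A (T, q) w))) = int (length T) + stack_delta A w
     \<and> bot A \<notin> set (fst (run A (T, q) w))"
  using assms(3)
proof (induction w rule: rev_induct)
  case Nil
  then show ?case using assms(1) by simp
next
  case (snoc a w)
  have pre: "\<forall>j\<le>length w. length B < length (fst (run A (B @ T, q) (take j w)))"
  proof (intro allI impI)
    fix j assume "j \<le> length w"
    then show "length B < length (fst (run A (B @ T, q) (take j w)))"
      using snoc(2)[rule_format, of j] by simp
  qed
  have IH: "run A (B @ T, q) w = (B @ fst (run A (T, q) w), snd (run A (T, q) w))"
    "int (length (fst (run A (T, q) w))) = int (length T) + stack_delta A w"
    "bot A \<notin> set (fst (run A (T, q) w))"
    using snoc(1)[OF pre] by auto
  have "length (fst (run A (B @ T, q) (take (length w) (w @ [a])))) > length B"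
    using snoc(2)[rule_format, of "length w"] by simp
  then have ne: "fst (run A (T, q) w) \<noteq> []" using IH(1) by auto
  show ?case using step_above[OF ne IH(3), of B "snd (run A (T, q) w)" a] IH
    by (simp add: run_snoc stack_delta_snoc)
qed

lemma stack_delta_pos_while_longer:
  assumes "bot A \<notin> set T" "T \<noteq> []"
    and "\<forall>j\<le>length w. length (fst (run A (B @ T, q) (take j w))) > length B"
  shows "\<forall>j\<le>length w. int (length T) + stack_delta A (take j w) > 0"
proof (intro allI impI)
  fix j assume j: "j \<le> length w"
  have "\<forall>i\<le>length (take j w). length (fst (run A (B @ T, q) (take i (take j w)))) > length B"
    using assms(3) j by (auto simp: min_def)
  from run_above_while_longer[OF assms(1,2) this] have
    e1: "fst (run A (B @ T, q) (take j w)) = B @ fst (run A (T, q) (take j w))"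
    and e2: "int (length (fst (run A (T, q) (take j w)))) =
      int (length T) + stack_delta A (take j w)"
    by auto
  have "length (fst (run A (B @ T, q) (take j w))) > length B" using assms(3) j by auto
  then have "0 < int (length (fst (run A (T, q) (take j w))))" using e1 by simp
  then show "int (length T) + stack_delta A (take j w) > 0" using e2 by linarith
qed

lemma proper_stack_step: "proper_stack A s \<Longrightarrow> proper_stack A (fst (step A (s, p) a))"
proof -
  assume g: "proper_stack A s"
  then obtain s' where s: "s = bot A # s'" "bot A \<notin> set s'"
    by (cases s) (auto simp: proper_stack_def)
  show ?thesis
  proof (cases "kind A a")
    case KCall
    then show ?thesis using g wf_push[OF KCall, of p] s by (auto simp: proper_stack_def)
  next
    case KRet
    show ?thesis
    proof (cases "s' = []")
      case True
      then show ?thesis using s KRet by (simp add: proper_stack_def)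
    next
      case False
      then have "last s \<noteq> bot A" using s by (metis last_ConsR last_in_set)
      then show ?thesis using s KRet False by (auto simp: proper_stack_def dest: in_set_butlastD)
    qed
  next
    case KInt
    then show ?thesis using g by simp
  qed
qed

lemma proper_stack_run: "proper_stack A s \<Longrightarrow> proper_stack A (fst (run A (s, p) w))"
proof (induction w arbitrary: s p)
  case (Cons a w)
  then show ?case using proper_stack_step[OF Cons(2), of p a]
    by (cases "step A (s, p) a") (simp add: Cons(1))
qed simp

lemma rConf_proper_stack: "c \<in> rConf A \<Longrightarrow> proper_stack A (fst c)"
  unfolding rConf_def init_conf_def using proper_stack_run[of "[bot A]"]
  by (auto simp: proper_stack_def)

text \<open>The stack is regarded as padded below with \<open>i\<close> further symbols, and the run never goes
  below the padding.\<close>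

lemma run_proper_stack_length_le:
  assumes "bot A \<notin> set gs" "\<forall>j<length w. int (length gs) + stack_delta A (take j w) + int i \<ge> 0"
  shows "\<exists>gs'. fst (run A (bot A # gs, q) w) = bot A # gs' \<and> bot A \<notin> set gs'
     \<and> int (length gs') \<le> max 0 (int (length gs) + stack_delta A w + int i)"
  using assms(2)
proof (induction w rule: rev_induct)
  case Nil
  then show ?case using assms(1) by auto
next
  case (snoc a w)
  obtain gs' where IH: "fst (run A (bot A # gs, q) w) = bot A # gs'" "bot A \<notin> set gs'"
     "int (length gs') \<le> max 0 (int (length gs) + stack_delta A w + int i)"
    using snoc(1) snoc(2) by (auto simp: nth_append)
  have pos: "int (length gs) + stack_delta A w + int i \<ge> 0"
    using snoc(2)[rule_format, of "length w"] by simp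
  obtain p where r: "run A (bot A # gs, q) w = (bot A # gs', p)" using IH(1)
    by (metis prod.collapse)
  show ?case
  proof (cases "kind A a")
    case KCall
    then show ?thesis using r IH pos wf_push[OF KCall, of p]
      by (auto simp: run_snoc stack_delta_snoc letter_delta_def)
  next
    case KRet
    show ?thesis
    proof (cases "gs' = []")
      case True
      then show ?thesis using r KRet by (auto simp: run_snoc stack_delta_snoc letter_delta_def)
    next
      case False
      then have "last (bot A # gs') \<noteq> bot A" using IH(2) by (metis last_ConsR last_in_set)
      then show ?thesis using r KRet False IH pos
        by (auto simp: run_snoc stack_delta_snoc letter_delta_def dest: in_set_butlastD)
    qed
  next
    case KInt
    then show ?thesis using r IH by (auto simp: run_snoc stack_delta_snoc letter_delta_def)
  qed
qed

end

definition stays_above :: "('q, 'g, 'a) vpa \<Rightarrow> nat \<Rightarrow> 'a list \<Rightarrow> bool" where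
  "stays_above A n w \<longleftrightarrow> (\<forall>i\<le>length w. int n + stack_delta A (take i w) > 0)"

definition first_exit :: "('q, 'g, 'a) vpa \<Rightarrow> nat \<Rightarrow> 'a list \<Rightarrow> bool" where
  "first_exit A n u \<longleftrightarrow>
     int n + stack_delta A u = 0 \<and> (\<forall>i<length u. int n + stack_delta A (take i u) > 0)"

lemma first_exit_prefix:
  assumes "\<not> stays_above A n w"
  obtains u v where "w = u @ v" "first_exit A n u"
proof -
  let ?low = "\<lambda>i. i \<le> length w \<and> int n + stack_delta A (take i w) \<le> 0"
  have ex: "\<exists>i. ?low i" using assms by (auto simp: stays_above_def not_less)
  define i where "i = (LEAST i. ?low i)"
  have i: "?low i" unfolding i_def by (rule LeastI_ex[OF ex])
  have above: "int n + stack_delta A (take j w) > 0" if "j < i" for j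
  proof -
    have "\<not> ?low j" using that unfolding i_def by (rule not_less_Least)
    then show ?thesis using that i by auto
  qed
  \<comment> \<open>the height changes by at most one per letter\<close>
  have "int n + stack_delta A (take i w) = 0"
  proof (cases i)
    case 0
    then show ?thesis using i by simp
  next
    case (Suc j)
    then have "stack_delta A (take i w) \<ge> stack_delta A (take j w) - 1"
      using i stack_delta_take_Suc[of j w A] by (auto simp: letter_delta_def split: lkind.splits)
    then show ?thesis using above[of j] Suc i by simp
  qed
  moreover have "\<forall>j<length (take i w). int n + stack_delta A (take j (take i w)) > 0"
    using above by (simp add: min_def)
  ultimately have "first_exit A n (take i w)" by (simp add: first_exit_def)
  then show thesis using that[of "take i w" "drop i w"] by simp
qed

text \<open>The shape of each stack in a convolution of two configuration words aligned at their
  tops: padded below with \<open>bot\<close>, and cut into a bottom part \<open>B\<close> and a top part \<open>T\<close>.\<close>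

definition bot_split :: "('q, 'g, 'a) vpa \<Rightarrow> 'g list \<Rightarrow> 'g list \<Rightarrow> bool" where
  "bot_split A B T \<longleftrightarrow> B \<noteq> [] \<and> (\<exists>k al. B @ T = replicate k (bot A) @ al \<and> proper_stack A al)"

lemma bot_split_cases:
  assumes "bot_split A B T"
  obtains (above) "bot A \<notin> set T"
  | (padding) m i gs where "B = replicate m (bot A)" "m \<ge> 1"
      "T = replicate i (bot A) @ bot A # gs" "bot A \<notin> set gs"
proof -
  obtain k al where k: "B @ T = replicate k (bot A) @ al" "proper_stack A al" "B \<noteq> []"
    using assms by (auto simp: bot_split_def)
  then obtain gs where al: "al = bot A # gs" "bot A \<notin> set gs"
    by (cases al) (auto simp: proper_stack_def)
  have S: "B @ T = replicate (Suc k) (bot A) @ gs" using k al by (simp add: replicate_app_Cons_same)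
  show thesis
  proof (cases "length B \<le> k")
    case True
    have "B = take (length B) (B @ T)" by simp
    also have "\<dots> = replicate (length B) (bot A)"
      unfolding S using True by (simp add: take_append min_def del: replicate_Suc)
    finally have B: "B = replicate (length B) (bot A)" .
    have "T = drop (length B) (B @ T)" by simp
    also have "\<dots> = replicate (Suc k - length B) (bot A) @ gs"
      unfolding S using True by (simp add: drop_append del: replicate_Suc)
    also have "\<dots> = replicate (k - length B) (bot A) @ bot A # gs"
      using True by (simp add: Suc_diff_le replicate_app_Cons_same)
    finally show thesis using padding B al k(3)
      by (metis length_greater_0_conv less_eq_Suc_le One_nat_def)
  next
    case False
    have "T = drop (length B) (B @ T)" by simp
    also have "\<dots> = drop (length B - Suc k) gs"
      unfolding S using False by (simp add: drop_append del: replicate_Suc)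
    finally have "set T \<subseteq> set gs" by (metis set_drop_subset)
    then show thesis using above al by auto
  qed
qed

context
  fixes A :: "('q, 'g, 'a) vpa"
  assumes wf: "wf_vpa A"
begin

lemma state_run_bot_split:
  assumes "bot_split A B T" "\<forall>j<length w. int (length T) + stack_delta A (take j w) > 0"
  shows "snd (run A (B @ T, q) w) = snd (run A ([bot A] @ T, q) w)"
  using assms(1)
proof (cases rule: bot_split_cases)
  case above
  then show ?thesis
    using run_above[OF wf above assms(2), of B q] run_above[OF wf above assms(2), of "[bot A]" q]
    by simp
next
  case (padding m i gs)
  then have "B @ T = replicate (m + i) (bot A) @ bot A # gs"
    "[bot A] @ T = replicate (1 + i) (bot A) @ bot A # gs"
    by (simp_all add: replicate_add)
  then show ?thesis
    using run_prefix_stack[of "bot A # gs" A "replicate (m + i) (bot A)" q w]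
      run_prefix_stack[of "bot A # gs" A "replicate (1 + i) (bot A)" q w]
    by (metis list.distinct(1) list.sel(1) prod.sel(2))
qed

lemma lang_run_bot_split_first_exit:
  assumes "bot_split A B T" "first_exit A (length T) u"
  shows "lang A (run A (B @ T, q) u) = lang A (B, snd (run A (B @ T, q) u))"
  using assms(1)
proof (cases rule: bot_split_cases)
  case above
  have c: "\<forall>j<length u. int (length T) + stack_delta A (take j u) > 0"
    using assms(2) by (auto simp: first_exit_def)
  have "fst (run A (T, q) u) = []"
    using run_above[OF wf above c, of B q] assms(2) by (simp add: first_exit_def)
  then show ?thesis using run_above[OF wf above c, of B q]
    by (metis append.right_neutral prod.collapse fst_conv)
next
  case (padding m i gs)
  have BT: "B @ T = replicate (m + i) (bot A) @ bot A # gs"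
    using padding by (simp add: replicate_add)
  have "\<forall>j<length u. int (length gs) + stack_delta A (take j u) + int i \<ge> 0"
    using assms(2) padding by (auto simp: first_exit_def)
  from run_proper_stack_length_le[OF wf padding(4) this, of q] obtain gs' where
    gs': "fst (run A (bot A # gs, q) u) = bot A # gs'"
      "int (length gs') \<le> max 0 (int (length gs) + stack_delta A u + int i)"
    by blast
  \<comment> \<open>the run ends just on the real bottom of the stack\<close>
  have "int (length gs) + stack_delta A u + int i = -1"
    using assms(2) padding by (simp add: first_exit_def)
  then have "gs' = []" using gs'(2) by simp
  then have "fst (run A (B @ T, q) u) = replicate (m + i) (bot A) @ [bot A]"
    unfolding BT using run_prefix_stack[of "bot A # gs" A "replicate (m + i) (bot A)" q u] gs'(1)
    by simp
  moreover have "lang A (replicate (m + i) (bot A) @ [bot A], p) = lang A ([bot A], p)" for p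
    by (rule lang_bot_stack) auto
  moreover have "lang A (B, p) = lang A ([bot A], p)" for p
    using padding by (intro lang_bot_stack) auto
  ultimately show ?thesis by (metis prod.collapse)
qed

lemma lang_eq_iff_split:
  assumes "bot_split A B1 T1" "bot_split A B2 T2" "length T1 = n" "length T2 = n"
  shows "lang A (B1 @ T1, q1) = lang A (B2 @ T2, q2) \<longleftrightarrow>
    (\<forall>w. stays_above A n w \<longrightarrow>
       (snd (run A ([bot A] @ T1, q1) w) \<in> fin A \<longleftrightarrow> snd (run A ([bot A] @ T2, q2) w) \<in> fin A)) \<and>
    (\<forall>u. first_exit A n u \<longrightarrow>
       lang A (B1, snd (run A ([bot A] @ T1, q1) u)) =
       lang A (B2, snd (run A ([bot A] @ T2, q2) u)))"
  (is "?L \<longleftrightarrow> ?N \<and> ?H")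
proof -
  have stays: "\<forall>j<length w. int n + stack_delta A (take j w) > 0"
    if "stays_above A n w \<or> first_exit A n w" for w
    using that by (auto simp: stays_above_def first_exit_def)
  note state1 = state_run_bot_split[OF assms(1), unfolded assms(3), OF stays]
    and state2 = state_run_bot_split[OF assms(2), unfolded assms(4), OF stays]
    and exit1 = lang_run_bot_split_first_exit[OF assms(1), unfolded assms(3)]
    and exit2 = lang_run_bot_split_first_exit[OF assms(2), unfolded assms(4)]
  show ?thesis
  proof
    assume L: ?L
    have ?N
    proof (intro allI impI)
      fix w assume "stays_above A n w"
      then show "snd (run A ([bot A] @ T1, q1) w) \<in> fin A \<longleftrightarrow>
          snd (run A ([bot A] @ T2, q2) w) \<in> fin A"
        using state1[of w q1] state2[of w q2] L by (metis (mono_tags) lang_def mem_Collect_eq)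
    qed
    moreover have ?H
    proof (intro allI impI)
      fix u assume "first_exit A n u"
      then show "lang A (B1, snd (run A ([bot A] @ T1, q1) u)) =
          lang A (B2, snd (run A ([bot A] @ T2, q2) u))"
        using state1[of u q1] state2[of u q2] exit1[of u q1] exit2[of u q2] L
        by (metis lang_run)
    qed
    ultimately show "?N \<and> ?H" ..
  next
    assume NH: "?N \<and> ?H"
    show ?L
    proof (intro set_eqI)
      fix w
      show "w \<in> lang A (B1 @ T1, q1) \<longleftrightarrow> w \<in> lang A (B2 @ T2, q2)"
      proof (cases "stays_above A n w")
        case True
        then show ?thesis using state1[of w q1] state2[of w q2] NH by (simp add: lang_def)
      next
        case False
        then obtain u v where uv: "w = u @ v" "first_exit A n u" by (rule first_exit_prefix)
        then show ?thesis
          using state1[of u q1] state2[of u q2] exit1[OF uv(2)] exit2[OF uv(2)] NH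
          by (simp add: lang_append)
      qed
    qed
  qed
qed

end

lemma length_step_le: "kind A a \<noteq> KCall \<Longrightarrow> length (fst (step A c a)) \<le> length (fst c)"
  by (cases c; cases "kind A a") auto

lemma run_last_push_above:
  assumes "length (fst c) \<le> n" "length (fst (run A c x)) > n"
  obtains x1 a w where "x = x1 @ a # w" "kind A a = KCall" "length (fst (run A c x1)) = n"
    "\<forall>j\<le>length w. length (fst (run A (run A c (x1 @ [a])) (take j w))) > n"
proof -
  define len where "len j = length (fst (run A c (take j x)))" for j
  define K where "K = {j. j \<le> length x \<and> len j \<le> n}"
  define k where "k = Max K"
  have fin: "finite K" by (simp add: K_def)
  moreover have "0 \<in> K" using assms(1) by (simp add: K_def len_def)
  ultimately have k: "k \<in> K" unfolding k_def by (intro Max_in) auto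
  have k_max: "j \<le> k" if "j \<in> K" for j unfolding k_def using fin that by (rule Max_ge)
  have "length x \<notin> K" using assms(2) by (auto simp: K_def len_def)
  then have k_less: "k < length x" using k by (auto simp: K_def order.order_iff_strict)
  have above: "len j > n" if "k < j" "j \<le> length x" for j
  proof (rule ccontr)
    assume "\<not> len j > n"
    then have "j \<in> K" using that(2) by (simp add: K_def)
    then show False using k_max that(1) by fastforce
  qed
  define x1 a w where "x1 = take k x" and "a = x ! k" and "w = drop (Suc k) x"
  have x: "x = x1 @ a # w" unfolding x1_def a_def w_def using k_less by (rule id_take_nth_drop)
  have run_x1a: "run A c (x1 @ [a]) = step A (run A c x1) a" by (simp add: run_snoc)
  have "len (Suc k) > n" "len k \<le> n" using above k_less k by (auto simp: K_def)
  then have longer: "length (fst (step A (run A c x1) a)) > n" and "length (fst (run A c x1)) \<le> n"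
    using k_less run_x1a by (simp_all add: len_def x1_def a_def take_Suc_conv_app_nth)
  then have call: "kind A a = KCall"
    using length_step_le[of A a "run A c x1"] by linarith
  obtain S p where "run A c x1 = (S, p)" by fastforce
  then have "length (fst (run A c x1)) = n"
    using longer \<open>length (fst (run A c x1)) \<le> n\<close> call by simp
  moreover have "length (fst (run A (run A c (x1 @ [a])) (take j w))) > n" if "j \<le> length w" for j
  proof -
    have "take (Suc k) x = x1 @ [a]"
      using k_less by (simp add: x1_def a_def take_Suc_conv_app_nth)
    then have "take (Suc k + j) x = x1 @ [a] @ take j w"
      unfolding take_add w_def by simp
    then show ?thesis using above[of "Suc k + j"] that k_less
      by (simp add: len_def run_append w_def)
  qed
  ultimately show thesis using that x call by blast
qed

context
  fixes A :: "('q, 'g, 'a) vpa"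
  assumes wf: "wf_vpa A"
begin

lemma rConf_append_run_above:
  assumes "(al, p) \<in> rConf A" "kind A a = KCall"
    and "\<forall>j<length w. 1 + stack_delta A (take j w) > 0"
    and "run A ([fst (dc A p a)], snd (dc A p a)) w = (be, q)"
  shows "(al @ be, q) \<in> rConf A"
proof -
  obtain x where x: "run A (init_conf A) x = (al, p)" using assms(1) by (auto simp: rConf_def)
  have nb: "bot A \<notin> set [fst (dc A p a)]" using wf_push[OF wf assms(2), of p] by auto
  have "run A (init_conf A) (x @ a # w) = run A (al @ [fst (dc A p a)], snd (dc A p a)) w"
    using x assms(2) by (simp add: run_append)
  also have "\<dots> = (al @ be, q)"
    using run_above[OF wf nb, of w al "snd (dc A p a)"] assms(3,4) by simp
  finally show ?thesis unfolding rConf_def by (metis (mono_tags, lifting) mem_Collect_eq)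
qed

lemma rConf_split_run_above:
  assumes "al \<noteq> []" "be \<noteq> []" "(al @ be, q) \<in> rConf A"
  obtains p a w where "(al, p) \<in> rConf A" "kind A a = KCall"
    "\<forall>j<length w. 1 + stack_delta A (take j w) > 0"
    "run A ([fst (dc A p a)], snd (dc A p a)) w = (be, q)"
proof -
  obtain x where x: "run A (init_conf A) x = (al @ be, q)" using assms(3) by (auto simp: rConf_def)
  have "length (fst (init_conf A)) \<le> length al" "length (fst (run A (init_conf A) x)) > length al"
    using assms(1,2) x by (auto simp: init_conf_def Suc_le_eq)
  then obtain x1 a w where split: "x = x1 @ a # w" "kind A a = KCall"
    "length (fst (run A (init_conf A) x1)) = length al"
    "\<forall>j\<le>length w. length (fst (run A (run A (init_conf A) (x1 @ [a])) (take j w))) > length al"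
    by (rule run_last_push_above)
  obtain S p where Sp: "run A (init_conf A) x1 = (S, p)" by fastforce
  let ?g = "fst (dc A p a)" and ?p' = "snd (dc A p a)"
  have run_x1a: "run A (init_conf A) (x1 @ [a]) = (S @ [?g], ?p')"
    using Sp split(2) by (simp add: run_snoc)
  have nb: "bot A \<notin> set [?g]" using wf_push[OF wf split(2), of p] by auto
  have longer: "\<forall>j\<le>length w. length (fst (run A (S @ [?g], ?p') (take j w))) > length S"
    using split(3,4) Sp run_x1a by simp
  have "run A (S @ [?g], ?p') w = (al @ be, q)"
    using x split(1) run_x1a by (simp add: run_append)
  then have "S = al" "run A ([?g], ?p') w = (be, q)"
    using run_above_while_longer[OF wf nb _ longer] split(3) Sp by auto
  moreover have "\<forall>j<length w. 1 + stack_delta A (take j w) > 0"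
    using stack_delta_pos_while_longer[OF wf nb _ longer] by simp
  moreover have "(S, p) \<in> rConf A"
    using Sp unfolding rConf_def by (metis (mono_tags, lifting) mem_Collect_eq)
  ultimately show thesis using that split(2) by blast
qed

end

section \<open>Configuration words\<close>

text \<open>Configurations are written state first and stack from the top down, so that the
  convolution of two configuration words aligns the stacks at their tops.\<close>

definition rconf_word :: "('g, 'q) conf \<Rightarrow> ('g + 'q) list" where
  "rconf_word c = Inr (snd c) # map Inl (rev (fst c))"

lemma rconf_word_eq_rev_conf_word: "rconf_word c = rev (conf_word c)"
  by (simp add: rconf_word_def conf_word_def rev_map)

lemma rconf_word_inj: "rconf_word c = rconf_word c' \<Longrightarrow> c = c'"
  by (cases c; cases c') (auto simp: rconf_word_def inj_map_eq_map[OF inj_Inl])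

lemma conf_word_inj: "conf_word c = conf_word c' \<Longrightarrow> c = c'"
  by (metis rconf_word_eq_rev_conf_word rconf_word_inj)

lemma conv_rconf_words_ne_Nil [simp]: "conv (rconf_word c) (rconf_word d) \<noteq> []"
  by (simp add: rconf_word_def)

definition proper_confs :: "('q, 'g, 'a) vpa \<Rightarrow> ('g, 'q) conf set" where
  "proper_confs A = {c. proper_stack A (fst c)}"

lemma rConf_subset_proper_confs: "wf_vpa A \<Longrightarrow> rConf A \<subseteq> proper_confs A"
  using rConf_proper_stack by (auto simp: proper_confs_def)

lemma regular_proper_rconf_words:
  fixes A :: "('q::finite, 'g, 'a) vpa"
  shows "regular (rconf_word ` proper_confs A)"
proof -
  let ?Top = "lists {Inl g | g. g \<noteq> bot A} :: ('g + 'q) list set"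
  have eq: "rconf_word ` proper_confs A = range (\<lambda>q. [Inr q]) @@ ?Top @@ {[Inl (bot A)]}"
  proof (intro equalityI subsetI)
    fix x assume "x \<in> rconf_word ` proper_confs A"
    then obtain gs q where "x = rconf_word (bot A # gs, q)" "bot A \<notin> set gs"
      by (auto simp: proper_confs_def proper_stack_def neq_Nil_conv)
    then have "x = [Inr q] @ map Inl (rev gs) @ [Inl (bot A)]" "map Inl (rev gs) \<in> ?Top"
      by (auto simp: rconf_word_def)
    then show "x \<in> range (\<lambda>q. [Inr q]) @@ ?Top @@ {[Inl (bot A)]}"
      unfolding conc_def by blast
  next
    fix x assume "x \<in> range (\<lambda>q. [Inr q]) @@ ?Top @@ {[Inl (bot A)]}"
    then obtain q y where x: "x = [Inr q] @ y @ [Inl (bot A)]" "y \<in> ?Top"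
      unfolding conc_def by blast
    have "y = map Inl (map projl y)" "bot A \<notin> set (map projl y)"
      using x(2) by (induction y) auto
    then have "x = rconf_word (bot A # rev (map projl y), q)"
      "proper_stack A (bot A # rev (map projl y))"
      using x(1) by (auto simp: rconf_word_def proper_stack_def)
    then show "x \<in> rconf_word ` proper_confs A" by (auto simp: proper_confs_def)
  qed
  show ?thesis unfolding eq
    by (intro regular_conc regular_lists regular_finite) simp_all
qed

lemma append_eq_map_Inl_snoc_Inr:
  assumes "u @ v = map Inl ga @ [Inr q]" "v \<noteq> []"
  obtains al be where "u = map Inl al" "v = map Inl be @ [Inr q]" "ga = al @ be"
proof -
  have len: "length u \<le> length ga"
    using assms arg_cong[OF assms(1), of length] by (cases v rule: rev_cases) auto
  have "u = take (length u) (map Inl ga @ [Inr q])" "v = drop (length u) (map Inl ga @ [Inr q])"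
    by (metis append_eq_conv_conj assms(1))+
  then show thesis
    using len that[of "take (length u) ga" "drop (length u) ga"] by (simp add: take_map drop_map)
qed

context
  fixes A :: "('q::finite, 'g, 'a) vpa"
  assumes wf: "wf_vpa A"
begin

text \<open>Whether \<open>\<alpha> \<beta> q\<close> is reachable depends on \<open>\<alpha>\<close> only through the set of states \<open>p\<close>
  with \<open>\<alpha> p\<close> reachable (for nonempty \<open>\<alpha>\<close> and \<open>\<beta>\<close>).\<close>

lemma regular_reachable_conf_words: "regular (conf_word ` rConf A)"
proof -
  let ?L = "conf_word ` rConf A"
  define f where "f u = (u = [], u \<in> range (map Inl), {p. (map projl u, p) \<in> rConf A}, u \<in> ?L)"
    for u :: "('g + 'q) list"
  have "finite (range f)" by (rule finite_subset[OF subset_UNIV]) simp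
  then show ?thesis
  proof (rule regularI_append)
    fix u u' v assume f_eq: "f u = f u'" and "u @ v \<in> ?L"
    then obtain ga q where c: "(ga, q) \<in> rConf A" "u @ v = map Inl ga @ [Inr q]"
      by (auto simp: conf_word_def)
    show "u' @ v \<in> ?L"
    proof (cases "u = [] \<or> v = []")
      case True
      then show ?thesis using f_eq \<open>u @ v \<in> ?L\<close> by (auto simp: f_def)
    next
      case False
      then obtain al be where u: "u = map Inl al" "v = map Inl be @ [Inr q]" "ga = al @ be"
        "al \<noteq> []"
        using append_eq_map_Inl_snoc_Inr[OF c(2)] by blast
      with f_eq obtain al' where u': "u' = map Inl al'" "al' \<noteq> []" by (auto simp: f_def)
      have S: "(al, p) \<in> rConf A \<longleftrightarrow> (al', p) \<in> rConf A" for p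
        using f_eq u u' by (simp add: f_def comp_def set_eq_iff)
      have "(al' @ be, q) \<in> rConf A"
      proof (cases "be = []")
        case True
        then show ?thesis using c(1) u(3) S by auto
      next
        case False
        from c(1) u(3) obtain p a w where
          "(al, p) \<in> rConf A" "kind A a = KCall" "\<forall>j<length w. 1 + stack_delta A (take j w) > 0"
          "run A ([fst (dc A p a)], snd (dc A p a)) w = (be, q)"
          using rConf_split_run_above[OF wf u(4) False] by blast
        then show ?thesis using S rConf_append_run_above[OF wf] by blast
      qed
      then show ?thesis using u u' by (force simp: conf_word_def)
    qed
  qed
qed

lemma regular_reachable_rconf_words: "regular (rconf_word ` rConf A)"
proof -
  have "rconf_word ` rConf A = rev ` conf_word ` rConf A"
    by (auto simp: rconf_word_eq_rev_conf_word image_iff)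
  then show ?thesis using regular_rev_image[OF regular_reachable_conf_words] by simp
qed

end

section \<open>Language equivalence of configurations is synchronous\<close>

definition decode_sym :: "'g \<Rightarrow> ('g + 'q) option \<Rightarrow> 'g" where
  "decode_sym b x = (case x of Some (Inl g) \<Rightarrow> g | _ \<Rightarrow> b)"

definition decode_state :: "('g + 'q) option \<Rightarrow> 'q" where
  "decode_state x = (case x of Some (Inr q) \<Rightarrow> q | _ \<Rightarrow> undefined)"

definition decode_stack :: "'g \<Rightarrow> ('g + 'q) option list \<Rightarrow> 'g list" where
  "decode_stack b xs = rev (map (decode_sym b) xs)"

lemma decode_conv_rconf_words:
  fixes c d :: "('g, 'q) conf"
  shows "decode_state (fst (hd (conv (rconf_word c) (rconf_word d)))) = snd c"
    and "decode_stack b (map fst (tl (conv (rconf_word c) (rconf_word d)))) =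
      replicate (length (fst d) - length (fst c)) b @ fst c"
proof -
  have m: "map fst (conv (rconf_word c) (rconf_word d)) =
      map Some (rconf_word c) @ replicate (length (rconf_word d) - length (rconf_word c)) None"
    by (rule map_fst_conv)
  have "hd (map fst (conv (rconf_word c) (rconf_word d))) = Some (Inr (snd c))"
    unfolding m by (simp add: rconf_word_def)
  then show "decode_state (fst (hd (conv (rconf_word c) (rconf_word d)))) = snd c"
    by (simp add: hd_map decode_state_def)
  have "map (decode_sym b) (tl (map fst (conv (rconf_word c) (rconf_word d)))) =
      rev (fst c) @ replicate (length (fst d) - length (fst c)) b"
    unfolding m by (simp add: rconf_word_def decode_sym_def comp_def)
  then show "decode_stack b (map fst (tl (conv (rconf_word c) (rconf_word d)))) =
      replicate (length (fst d) - length (fst c)) b @ fst c"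
    by (simp add: decode_stack_def map_tl)
qed

lemma decode_conv_rconf_words_swap:
  fixes c d :: "('g, 'q) conf"
  shows "decode_state (snd (hd (conv (rconf_word c) (rconf_word d)))) = snd d"
    and "decode_stack b (map snd (tl (conv (rconf_word c) (rconf_word d)))) =
      replicate (length (fst c) - length (fst d)) b @ fst d"
proof -
  note swapped = decode_conv_rconf_words[where c=d and d=c]
  have sw: "conv (rconf_word c) (rconf_word d) = map prod.swap (conv (rconf_word d) (rconf_word c))"
    by (rule conv_swap)
  show "decode_state (snd (hd (conv (rconf_word c) (rconf_word d)))) = snd d"
    using swapped(1) unfolding sw by (simp add: hd_map)
  show "decode_stack b (map snd (tl (conv (rconf_word c) (rconf_word d)))) =
      replicate (length (fst c) - length (fst d)) b @ fst d"
    using swapped(2) unfolding sw by (simp add: map_tl comp_def)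
qed

definition lang_eq_rel :: "('q, 'g, 'a) vpa \<Rightarrow> (('g + 'q) list \<times> ('g + 'q) list) set" where
  "lang_eq_rel A = {(rconf_word c1, rconf_word c2) | c1 c2.
     c1 \<in> proper_confs A \<and> c2 \<in> proper_confs A \<and> lang A c1 = lang A c2}"

lemma rconf_words_in_lang_eq_rel:
  "(rconf_word c1, rconf_word c2) \<in> lang_eq_rel A \<longleftrightarrow>
    c1 \<in> proper_confs A \<and> c2 \<in> proper_confs A \<and> lang A c1 = lang A c2"
  unfolding lang_eq_rel_def by (blast dest: rconf_word_inj)

definition proper_conv_lang ::
  "('q, 'g, 'a) vpa \<Rightarrow> (('g + 'q) option \<times> ('g + 'q) option) list set" where
  "proper_conv_lang A = conv_lang (rconf_word ` proper_confs A \<times> rconf_word ` proper_confs A)"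

lemma regular_proper_conv_lang: "regular (proper_conv_lang (A :: ('q::finite, 'g, 'a) vpa))"
  unfolding proper_conv_lang_def by (intro regular_conv_lang_Times regular_proper_rconf_words)

text \<open>Here \<open>u\<close> is a prefix of the convolution of two configuration words: its first row holds
  the two states, the others the top parts of the two stacks.\<close>

context
  fixes A :: "('q, 'g, 'a) vpa"
begin

definition top_conf1 :: "(('g + 'q) option \<times> ('g + 'q) option) list \<Rightarrow> ('g, 'q) conf" where
  "top_conf1 u = ([bot A] @ decode_stack (bot A) (map fst (tl u)), decode_state (fst (hd u)))"

definition top_conf2 :: "(('g + 'q) option \<times> ('g + 'q) option) list \<Rightarrow> ('g, 'q) conf" where
  "top_conf2 u = ([bot A] @ decode_stack (bot A) (map snd (tl u)), decode_state (snd (hd u)))"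

definition stays_agree :: "(('g + 'q) option \<times> ('g + 'q) option) list \<Rightarrow> bool" where
  "stays_agree u \<longleftrightarrow> (\<forall>w. stays_above A (length u - 1) w \<longrightarrow>
     (snd (run A (top_conf1 u) w) \<in> fin A \<longleftrightarrow> snd (run A (top_conf2 u) w) \<in> fin A))"

definition exit_states :: "(('g + 'q) option \<times> ('g + 'q) option) list \<Rightarrow> ('q \<times> 'q) set" where
  "exit_states u = {(snd (run A (top_conf1 u) w), snd (run A (top_conf2 u) w)) | w.
     first_exit A (length u - 1) w}"

end

lemma lang_eq_iff_prefix_info:
  assumes wf: "wf_vpa A"
    and uv: "u \<noteq> []" "v \<noteq> []" "u @ v = conv (rconf_word c1) (rconf_word c2)"
    and c: "c1 \<in> proper_confs A" "c2 \<in> proper_confs A"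
  shows "lang A c1 = lang A c2 \<longleftrightarrow> stays_agree A u \<and>
    (\<forall>(p, p') \<in> exit_states A u.
       lang A (decode_stack (bot A) (map fst v), p) =
       lang A (decode_stack (bot A) (map snd v), p'))"
proof -
  let ?B1 = "decode_stack (bot A) (map fst v)" and ?B2 = "decode_stack (bot A) (map snd v)"
  let ?T1 = "decode_stack (bot A) (map fst (tl u))"
    and ?T2 = "decode_stack (bot A) (map snd (tl u))"
  have tl: "tl (u @ v) = tl u @ v" and hd: "hd (u @ v) = hd u" using uv(1) by simp_all
  have d1: "?B1 @ ?T1 = replicate (length (fst c2) - length (fst c1)) (bot A) @ fst c1"
    using decode_conv_rconf_words(2)[of "bot A" c1 c2] uv(3) tl by (simp add: decode_stack_def)
  have d2: "?B2 @ ?T2 = replicate (length (fst c1) - length (fst c2)) (bot A) @ fst c2"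
    using decode_conv_rconf_words_swap(2)[of "bot A" c1 c2] uv(3) tl by (simp add: decode_stack_def)
  have q1: "decode_state (fst (hd u)) = snd c1"
    using decode_conv_rconf_words(1)[of c1 c2] uv(3) hd by simp
  have q2: "decode_state (snd (hd u)) = snd c2"
    using decode_conv_rconf_words_swap(1)[of c1 c2] uv(3) hd by simp
  have g: "proper_stack A (fst c1)" "proper_stack A (fst c2)"
    using c by (auto simp: proper_confs_def)
  have l1: "lang A c1 = lang A (?B1 @ ?T1, decode_state (fst (hd u)))"
    unfolding d1 q1 using lang_prefix_stack[of "fst c1" A] g(1) by (simp add: proper_stack_def)
  have l2: "lang A c2 = lang A (?B2 @ ?T2, decode_state (snd (hd u)))"
    unfolding d2 q2 using lang_prefix_stack[of "fst c2" A] g(2) by (simp add: proper_stack_def)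
  have split1: "bot_split A ?B1 ?T1"
    unfolding bot_split_def using d1 g(1) uv(2) by (auto simp: decode_stack_def)
  have split2: "bot_split A ?B2 ?T2"
    unfolding bot_split_def using d2 g(2) uv(2) by (auto simp: decode_stack_def)
  have len: "length ?T1 = length u - 1" "length ?T2 = length u - 1"
    by (simp_all add: decode_stack_def)
  show ?thesis
    unfolding l1 l2 lang_eq_iff_split[OF wf split1 split2 len] stays_agree_def exit_states_def
      top_conf1_def top_conf2_def
    by blast
qed

text \<open>By \<open>lang_eq_iff_prefix_info\<close>, the quotient of a prefix \<open>u\<close> is determined by
  \<open>stays_agree A u\<close> and the set of pairs of states \<open>exit_states A u\<close>.\<close>

lemma regular_conv_lang_lang_eq_rel:
  fixes A :: "('q::finite, 'g, 'a) vpa"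
  assumes wf: "wf_vpa A"
  shows "regular (conv_lang (lang_eq_rel A))"
proof -
  let ?P = "proper_conv_lang A"
  define f where "f u = (u = [], lquot ?P u, u \<in> conv_lang (lang_eq_rel A), stays_agree A u,
    exit_states A u)" for u
  have "range f \<subseteq> UNIV \<times> range (lquot ?P) \<times> UNIV \<times> UNIV \<times> UNIV" by (auto simp: f_def)
  moreover have "finite ((UNIV :: bool set) \<times> range (lquot ?P) \<times> (UNIV :: bool set) \<times>
      (UNIV :: bool set) \<times> (UNIV :: ('q \<times> 'q) set set))"
    using regular_proper_conv_lang[of A] unfolding regular_def by simp
  ultimately have "finite (range f)" by (rule finite_subset)
  then show ?thesis
  proof (rule regularI_append)
    fix u u' v assume f_eq: "f u = f u'" and uv: "u @ v \<in> conv_lang (lang_eq_rel A)"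
    show "u' @ v \<in> conv_lang (lang_eq_rel A)"
    proof (cases "u = [] \<or> v = []")
      case True
      then show ?thesis using f_eq uv by (auto simp: f_def)
    next
      case False
      then have ne: "u \<noteq> []" "v \<noteq> []" "u' \<noteq> []" using f_eq by (auto simp: f_def)
      obtain c1 c2 where c: "u @ v = conv (rconf_word c1) (rconf_word c2)"
        "c1 \<in> proper_confs A" "c2 \<in> proper_confs A" "lang A c1 = lang A c2"
        using uv by (auto simp: conv_lang_def lang_eq_rel_def)
      have "v \<in> lquot ?P u" using c by (simp add: lquot_def proper_conv_lang_def)
      then have "v \<in> lquot ?P u'" using f_eq by (simp add: f_def)
      then obtain c1' c2' where c': "u' @ v = conv (rconf_word c1') (rconf_word c2')"
        "c1' \<in> proper_confs A" "c2' \<in> proper_confs A"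
        by (auto simp: lquot_def proper_conv_lang_def conv_lang_def)
      have "lang A c1' = lang A c2'"
        using lang_eq_iff_prefix_info[OF wf ne(1,2) c(1-3)] c(4) f_eq
          lang_eq_iff_prefix_info[OF wf ne(3,2) c']
        by (simp add: f_def)
      then show ?thesis using c' by (simp add: rconf_words_in_lang_eq_rel)
    qed
  qed
qed

section \<open>The length-lexicographic order is synchronous\<close>

lemma List_lexordp_less_eq:
  "List.lexordp (<) xs ys = ord_class.lexordp (xs :: 'g::linorder list) ys"
  by (simp add: List.lexordp_def lexordp_conv_lexord)

lemma conf_less_irrefl: "\<not> conf_less c (c :: ('g::linorder, 'q::linorder) conf)"
  by (auto simp: conf_less_def List_lexordp_less_eq lexordp_irreflexive')

lemma conf_less_trans:
  "conf_less a b \<Longrightarrow> conf_less b c \<Longrightarrow> conf_less a (c :: ('g::linorder, 'q::linorder) conf)"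
  by (auto simp: conf_less_def List_lexordp_less_eq intro: lexordp_trans)

lemma conf_less_linear:
  "a \<noteq> b \<Longrightarrow> conf_less a b \<or> conf_less b (a :: ('g::linorder, 'q::linorder) conf)"
  using lexordp_linear[of "fst a" "fst b"]
  by (cases a; cases b) (auto simp: conf_less_def List_lexordp_less_eq neq_iff)

lemma lexordp_snoc:
  fixes xs ys :: "'g::linorder list"
  assumes "length xs = length ys"
  shows "ord_class.lexordp (xs @ [x]) (ys @ [y]) \<longleftrightarrow> ord_class.lexordp xs ys \<or> xs = ys \<and> x < y"
  using assms by (induction xs ys rule: list_induct2) (auto simp: not_less_iff_gr_or_eq)

text \<open>A deterministic automaton comparing two configuration words of equal length, read
  top-down in parallel: the state is the comparison result so far, the stack symbol nearest
  to the bottom being decisive.\<close>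

definition lex_step ::
  "bool option \<Rightarrow> ('g::linorder + 'q::linorder) option \<times> ('g + 'q) option \<Rightarrow> bool option" where
  "lex_step s r = (case (s, r) of
      (None, (Some (Inr q1), Some (Inr q2))) \<Rightarrow> Some (q1 < q2)
    | (Some b, (Some (Inl a1), Some (Inl a2))) \<Rightarrow>
        Some (if a1 < a2 then True else if a2 < a1 then False else b)
    | _ \<Rightarrow> None)"

lemma foldl_lex_step_conv:
  fixes xs ys :: "'g::linorder list"
  assumes "length xs = length ys"
  shows "foldl lex_step (Some s) (conv (map Inl xs :: ('g + 'q::linorder) list) (map Inl ys)) =
    Some (ord_class.lexordp (rev xs) (rev ys) \<or> xs = ys \<and> s)"
  using assms
proof (induction xs ys arbitrary: s rule: list_induct2)
  case (Cons x xs y ys)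
  have "foldl lex_step (Some s) (conv (map Inl (x # xs) :: ('g + 'q) list) (map Inl (y # ys))) =
      foldl lex_step (Some (if x < y then True else if y < x then False else s))
        (conv (map Inl xs :: ('g + 'q) list) (map Inl ys))"
    by (simp add: lex_step_def)
  also have "\<dots> = Some (ord_class.lexordp (rev xs) (rev ys) \<or>
      xs = ys \<and> (if x < y then True else if y < x then False else s))"
    by (rule Cons.IH)
  also have "\<dots> = Some (ord_class.lexordp (rev (x # xs)) (rev (y # ys)) \<or> x # xs = y # ys \<and> s)"
    using lexordp_snoc[of "rev xs" "rev ys" x y] Cons.hyps
    by (auto simp: not_less_iff_gr_or_eq lexordp_irreflexive')
  finally show ?case .
qed simp

lemma fst_last_conv_eq_None_iff:
  assumes "conv u v \<noteq> []"
  shows "fst (last (conv u v)) = None \<longleftrightarrow> length u < length v"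
proof -
  have "fst (last (conv u v)) = last (map Some u @ replicate (length v - length u) None)"
    using assms by (simp add: last_map flip: map_fst_conv)
  moreover have "u \<noteq> []" if "\<not> length u < length v"
    using assms that by (cases u; cases v) auto
  ultimately show ?thesis by (auto simp: last_append last_map)
qed

lemma conf_less_iff_conv_rconf_words:
  fixes c1 c2 :: "('g::linorder, 'q::linorder) conf"
  defines "x \<equiv> conv (rconf_word c1) (rconf_word c2)"
  shows "conf_less c1 c2 \<longleftrightarrow>
    fst (last x) = None \<or> x \<in> lists rows_both \<and> foldl lex_step None x = Some True"
proof -
  obtain al1 q1 al2 q2 where c: "c1 = (al1, q1)" "c2 = (al2, q2)" by fastforce
  have "x \<noteq> []" unfolding x_def by simp
  then have last: "fst (last x) = None \<longleftrightarrow> length al1 < length al2"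
    unfolding x_def using fst_last_conv_eq_None_iff[of "rconf_word c1" "rconf_word c2"] c
    by (simp add: rconf_word_def del: conv.simps)
  have lists: "x \<in> lists rows_both \<longleftrightarrow> length al1 = length al2"
    unfolding x_def conv_in_lists_rows_both_iff c by (simp add: rconf_word_def)
  have "foldl lex_step None x = Some (ord_class.lexordp al1 al2 \<or> al1 = al2 \<and> q1 < q2)"
    if "length al1 = length al2"
    using that foldl_lex_step_conv[of "rev al1" "rev al2" "q1 < q2"]
    by (simp add: x_def c rconf_word_def lex_step_def)
  then show ?thesis using last lists c by (auto simp: conf_less_def List_lexordp_less_eq)
qed

definition conf_less_rel ::
  "('q::linorder, 'g::linorder, 'a) vpa \<Rightarrow> (('g + 'q) list \<times> ('g + 'q) list) set" where
  "conf_less_rel A = {(rconf_word c1, rconf_word c2) | c1 c2.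
     c1 \<in> proper_confs A \<and> c2 \<in> proper_confs A \<and> conf_less c1 c2}"

lemma rconf_words_in_conf_less_rel:
  "(rconf_word c1, rconf_word c2) \<in> conf_less_rel A \<longleftrightarrow>
    c1 \<in> proper_confs A \<and> c2 \<in> proper_confs A \<and> conf_less c1 c2"
  unfolding conf_less_rel_def by (blast dest: rconf_word_inj)

lemma regular_conv_lang_conf_less_rel:
  fixes A :: "('q::{finite,linorder}, 'g::linorder, 'a) vpa"
  shows "regular (conv_lang (conf_less_rel A))"
proof -
  have iff: "x \<in> conv_lang (conf_less_rel A) \<longleftrightarrow> x \<in> proper_conv_lang A \<and>
      (fst (last x) = None \<or> x \<in> lists rows_both \<and> foldl lex_step None x = Some True)" for x
  proof (cases "x \<in> proper_conv_lang A")
    case True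
    then obtain c1 c2 where "x = conv (rconf_word c1) (rconf_word c2)"
      "c1 \<in> proper_confs A" "c2 \<in> proper_confs A"
      by (auto simp: proper_conv_lang_def conv_lang_def)
    then show ?thesis
      using True by (simp add: rconf_words_in_conf_less_rel conf_less_iff_conv_rconf_words)
  next
    case False
    have "conv_lang (conf_less_rel A) \<subseteq> proper_conv_lang A"
      unfolding proper_conv_lang_def conv_lang_def conf_less_rel_def by (rule image_mono) blast
    then show ?thesis using False by blast
  qed
  moreover have "x \<in> proper_conv_lang A \<Longrightarrow> x \<noteq> []" for x
    by (auto simp: proper_conv_lang_def conv_lang_def)
  ultimately have "conv_lang (conf_less_rel A) = proper_conv_lang A \<inter>
      ({x. x \<noteq> [] \<and> fst (last x) = None} \<union>
       lists rows_both \<inter> {x. foldl lex_step None x \<in> {Some True}})"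
    by blast
  then show ?thesis
    by (simp only:) (intro regular_Int regular_Un regular_proper_conv_lang regular_last
        regular_lists regular_foldl)
qed

section \<open>The representative relation is synchronous\<close>

lemma finite_ex_conf_less_least:
  assumes "finite S" "S \<noteq> {}"
  shows "\<exists>m\<in>S. \<forall>c\<in>S. c = m \<or> conf_less m (c :: ('g::linorder, 'q::linorder) conf)"
  using assms
proof (induction S rule: finite_ne_induct)
  case (insert x S)
  then obtain m where m: "m \<in> S" "\<forall>c\<in>S. c = m \<or> conf_less m c" by blast
  show ?case
  proof (cases "conf_less x m")
    case True
    then show ?thesis using m by (auto intro: conf_less_trans)
  next
    case False
    then show ?thesis using m conf_less_linear[of x m] by auto
  qed
qed simp

text \<open>Over finite alphabets there are only finitely many configurations of each stack
  height, so every nonempty set has a least element.\<close>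

lemma ex_conf_less_least:
  assumes "E \<noteq> {}"
  shows "\<exists>m\<in>E. \<forall>c\<in>E. c = m \<or> conf_less m (c :: ('g::{finite,linorder}, 'q::{finite,linorder}) conf)"
proof -
  have ex: "\<exists>n. \<exists>c\<in>E. length (fst c) = n" using assms by auto
  define n where "n = (LEAST n. \<exists>c\<in>E. length (fst c) = n)"
  have n: "\<exists>c\<in>E. length (fst c) = n" unfolding n_def by (rule LeastI_ex[OF ex])
  have n_le: "\<And>c. c \<in> E \<Longrightarrow> n \<le> length (fst c)" unfolding n_def by (auto intro: Least_le)
  define En where "En = {c\<in>E. length (fst c) = n}"
  have "En \<subseteq> {xs. set xs \<subseteq> UNIV \<and> length xs = n} \<times> UNIV" by (auto simp: En_def)
  moreover have "finite ({xs :: 'g list. set xs \<subseteq> UNIV \<and> length xs = n} \<times> (UNIV :: 'q set))"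
    by (intro finite_cartesian_product finite_lists_length_eq) simp_all
  ultimately have "finite En" by (rule finite_subset)
  moreover have "En \<noteq> {}" using n by (auto simp: En_def)
  ultimately obtain m where m: "m \<in> En" "\<forall>c\<in>En. c = m \<or> conf_less m c"
    using finite_ex_conf_less_least by blast
  have "c = m \<or> conf_less m c" if c: "c \<in> E" for c
  proof (cases "length (fst c) = n")
    case True
    then have "c \<in> En" using c by (simp add: En_def)
    then show ?thesis using m(2) by blast
  next
    case False
    then have "length (fst m) < length (fst c)" using n_le[OF c] m(1) by (auto simp: En_def)
    then show ?thesis by (simp add: conf_less_def)
  qed
  then show ?thesis using m(1) unfolding En_def by blast
qed

definition is_rep ::
  "('q::linorder, 'g::linorder, 'a) vpa \<Rightarrow> ('g, 'q) conf \<Rightarrow> ('g, 'q) conf \<Rightarrow> bool" where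
  "is_rep A c c' \<longleftrightarrow> c' \<in> rConf A \<and> lang A c' = lang A c \<and>
     (\<forall>c''\<in>rConf A. lang A c'' = lang A c \<longrightarrow> c'' = c' \<or> conf_less c' c'')"

lemma is_rep_unique: "is_rep A c c1 \<Longrightarrow> is_rep A c c2 \<Longrightarrow> c1 = c2"
  unfolding is_rep_def by (metis conf_less_irrefl conf_less_trans)

lemma is_rep_rep:
  fixes A :: "('q::{finite,linorder}, 'g::{finite,linorder}, 'a) vpa"
  assumes "\<exists>c'\<in>rConf A. lang A c' = lang A c"
  shows "is_rep A c (rep A c)"
proof -
  have "{c'\<in>rConf A. lang A c' = lang A c} \<noteq> {}" using assms by auto
  from ex_conf_less_least[OF this] obtain m where "m \<in> rConf A" "lang A m = lang A c"
    "\<forall>c''\<in>{c'\<in>rConf A. lang A c' = lang A c}. c'' = m \<or> conf_less m c''"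
    by blast
  then have "is_rep A c m" unfolding is_rep_def by auto
  then have "\<exists>!c'. is_rep A c c'" using is_rep_unique by blast
  then show ?thesis unfolding rep_def is_rep_def[symmetric] by (rule theI')
qed

lemma rep_eq_The_False:
  assumes "\<not> (\<exists>c'\<in>rConf A. lang A c' = lang A c)"
  shows "rep A c = (THE _. False)"
proof -
  have "(\<lambda>c'. is_rep A c c') = (\<lambda>_. False)" using assms by (auto simp: is_rep_def fun_eq_iff)
  then show ?thesis unfolding rep_def is_rep_def[symmetric] by simp
qed

definition reach_words :: "('q, 'g, 'a) vpa \<Rightarrow> ('g + 'q) list set" where
  "reach_words A = rconf_word ` rConf A"

definition least_words :: "('q::linorder, 'g::linorder, 'a) vpa \<Rightarrow> ('g + 'q) list set" where
  "least_words A = reach_words A -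
     Domain (lang_eq_rel A \<inter> UNIV \<times> reach_words A - Id - conf_less_rel A)"

definition unrep_words :: "('q, 'g, 'a) vpa \<Rightarrow> ('g + 'q) list set" where
  "unrep_words A = rconf_word ` proper_confs A - Domain (lang_eq_rel A \<inter> UNIV \<times> reach_words A)"

definition rep_rel ::
  "('q::linorder, 'g::linorder, 'a) vpa \<Rightarrow> (('g + 'q) list \<times> ('g + 'q) list) set" where
  "rep_rel A = {(rconf_word c, rconf_word (rep A c)) | c. c \<in> proper_confs A}"

context
  fixes A :: "('q::{finite,linorder}, 'g::{finite,linorder}, 'a) vpa"
  assumes wf: "wf_vpa A"
begin

lemma rconf_word_in_reach_words: "rconf_word c \<in> reach_words A \<longleftrightarrow> c \<in> rConf A"
  by (auto simp: reach_words_def dest: rconf_word_inj)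

lemma rconf_word_in_least_words:
  "rconf_word c \<in> least_words A \<longleftrightarrow>
    c \<in> rConf A \<and> (\<forall>c''\<in>rConf A. lang A c'' = lang A c \<longrightarrow> c'' = c \<or> conf_less c c'')"
proof -
  let ?R = "lang_eq_rel A \<inter> UNIV \<times> reach_words A - Id - conf_less_rel A"
  have "rconf_word c \<in> Domain ?R \<longleftrightarrow>
      (\<exists>c''\<in>rConf A. lang A c'' = lang A c \<and> c'' \<noteq> c \<and> \<not> conf_less c c'')"
    if c: "c \<in> rConf A"
  proof
    assume "rconf_word c \<in> Domain ?R"
    then obtain c'' where "(rconf_word c, rconf_word c'') \<in> ?R"
      by (auto simp: reach_words_def)
    then show "\<exists>c''\<in>rConf A. lang A c'' = lang A c \<and> c'' \<noteq> c \<and> \<not> conf_less c c''"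
      by (auto simp: rconf_words_in_lang_eq_rel rconf_words_in_conf_less_rel
          rconf_word_in_reach_words)
  next
    assume "\<exists>c''\<in>rConf A. lang A c'' = lang A c \<and> c'' \<noteq> c \<and> \<not> conf_less c c''"
    then obtain c'' where "c'' \<in> rConf A" "lang A c'' = lang A c" "c'' \<noteq> c" "\<not> conf_less c c''"
      by blast
    then have "(rconf_word c, rconf_word c'') \<in> ?R"
      using c rConf_subset_proper_confs[OF wf]
      by (auto simp: rconf_words_in_lang_eq_rel rconf_words_in_conf_less_rel
          rconf_word_in_reach_words dest: rconf_word_inj)
    then show "rconf_word c \<in> Domain ?R" by blast
  qed
  then show ?thesis by (auto simp: least_words_def rconf_word_in_reach_words)
qed

lemma rep_rel_reachable_iff:
  assumes "c \<in> proper_confs A"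
  shows "(rconf_word c, y) \<in> lang_eq_rel A \<inter> UNIV \<times> least_words A \<longleftrightarrow>
    (\<exists>c'\<in>rConf A. lang A c' = lang A c) \<and> y = rconf_word (rep A c)"
proof
  assume y: "(rconf_word c, y) \<in> lang_eq_rel A \<inter> UNIV \<times> least_words A"
  then obtain c' where c': "y = rconf_word c'" "lang A c = lang A c'"
    by (auto simp: lang_eq_rel_def dest: rconf_word_inj)
  then have "is_rep A c c'" using y by (simp add: rconf_word_in_least_words is_rep_def)
  then show "(\<exists>c'\<in>rConf A. lang A c' = lang A c) \<and> y = rconf_word (rep A c)"
    using c' is_rep_rep is_rep_unique by (metis is_rep_def)
next
  assume "(\<exists>c'\<in>rConf A. lang A c' = lang A c) \<and> y = rconf_word (rep A c)"
  then have "is_rep A c (rep A c)" "y = rconf_word (rep A c)" using is_rep_rep by blast+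
  then show "(rconf_word c, y) \<in> lang_eq_rel A \<inter> UNIV \<times> least_words A"
    using assms rConf_subset_proper_confs[OF wf]
    by (auto simp: is_rep_def rconf_words_in_lang_eq_rel rconf_word_in_least_words)
qed

lemma rconf_word_in_unrep_words:
  assumes "c \<in> proper_confs A"
  shows "rconf_word c \<in> unrep_words A \<longleftrightarrow> \<not> (\<exists>c'\<in>rConf A. lang A c' = lang A c)"
proof -
  have "rconf_word c \<in> Domain (lang_eq_rel A \<inter> UNIV \<times> reach_words A) \<longleftrightarrow>
      (\<exists>c'\<in>rConf A. lang A c' = lang A c)"
  proof
    assume "rconf_word c \<in> Domain (lang_eq_rel A \<inter> UNIV \<times> reach_words A)"
    then obtain c' where "(rconf_word c, rconf_word c') \<in> lang_eq_rel A" "c' \<in> rConf A"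
      by (auto simp: reach_words_def)
    then show "\<exists>c'\<in>rConf A. lang A c' = lang A c" by (auto simp: rconf_words_in_lang_eq_rel)
  next
    assume "\<exists>c'\<in>rConf A. lang A c' = lang A c"
    then obtain c' where "c' \<in> rConf A" "lang A c' = lang A c" by blast
    then have "(rconf_word c, rconf_word c') \<in> lang_eq_rel A \<inter> UNIV \<times> reach_words A"
      using assms rConf_subset_proper_confs[OF wf]
      by (auto simp: rconf_words_in_lang_eq_rel rconf_word_in_reach_words)
    then show "rconf_word c \<in> Domain (lang_eq_rel A \<inter> UNIV \<times> reach_words A)" by blast
  qed
  then show ?thesis using assms by (simp add: unrep_words_def)
qed

lemma rep_rel_eq:
  "rep_rel A = lang_eq_rel A \<inter> UNIV \<times> least_words A \<union> unrep_words A \<times> {rconf_word (THE _. False)}"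
proof (intro equalityI subsetI)
  fix x assume "x \<in> rep_rel A"
  then obtain c where x: "x = (rconf_word c, rconf_word (rep A c))" "c \<in> proper_confs A"
    by (auto simp: rep_rel_def)
  show "x \<in> lang_eq_rel A \<inter> UNIV \<times> least_words A \<union> unrep_words A \<times> {rconf_word (THE _. False)}"
  proof (cases "\<exists>c'\<in>rConf A. lang A c' = lang A c")
    case True
    then show ?thesis using rep_rel_reachable_iff[OF x(2)] x(1) by blast
  next
    case False
    then have "rep A c = (THE _. False)" by (rule rep_eq_The_False)
    then show ?thesis using False rconf_word_in_unrep_words[OF x(2)] x(1) by simp
  qed
next
  fix x
  assume x: "x \<in> lang_eq_rel A \<inter> UNIV \<times> least_words A \<union> unrep_words A \<times> {rconf_word (THE _. False)}"
  then obtain c y where c: "x = (rconf_word c, y)" "c \<in> proper_confs A"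
    by (auto simp: lang_eq_rel_def unrep_words_def)
  with x consider "(rconf_word c, y) \<in> lang_eq_rel A \<inter> UNIV \<times> least_words A"
    | "rconf_word c \<in> unrep_words A" "y = rconf_word (THE _. False)"
    by blast
  then have "y = rconf_word (rep A c)"
  proof cases
    case 1
    then show ?thesis using rep_rel_reachable_iff[OF c(2)] by blast
  next
    case 2
    then have "rep A c = (THE _. False)"
      using rconf_word_in_unrep_words[OF c(2)] by (intro rep_eq_The_False) blast
    then show ?thesis using 2 by simp
  qed
  then show "x \<in> rep_rel A" using c unfolding rep_rel_def by blast
qed

lemma regular_conv_lang_rep_rel: "regular (conv_lang (rep_rel A))"
proof -
  have eq: "regular (conv_lang (lang_eq_rel A))"
    by (rule regular_conv_lang_lang_eq_rel[OF wf])
  have reach: "regular (reach_words A)"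
    unfolding reach_words_def by (rule regular_reachable_rconf_words[OF wf])
  have eq_reach: "regular (conv_lang (lang_eq_rel A \<inter> UNIV \<times> reach_words A))"
    by (rule regular_conv_lang_Int[OF eq regular_conv_lang_Times[OF regular_UNIV reach]])
  have "regular (conv_lang (lang_eq_rel A \<inter> UNIV \<times> reach_words A - Id - conf_less_rel A))"
    by (intro regular_conv_lang_Diff eq_reach regular_conv_lang_Id regular_conv_lang_conf_less_rel)
  then have "regular (least_words A)"
    unfolding least_words_def by (intro regular_Diff reach regular_Domain)
  then have least: "regular (conv_lang (lang_eq_rel A \<inter> UNIV \<times> least_words A))"
    by (intro regular_conv_lang_Int eq regular_conv_lang_Times regular_UNIV)
  have "regular (unrep_words A)"
    unfolding unrep_words_def
    by (intro regular_Diff regular_proper_rconf_words regular_Domain eq_reach)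
  then have unrep: "regular (conv_lang (unrep_words A \<times> {rconf_word (THE _. False)}))"
    by (intro regular_conv_lang_Times) (simp_all add: regular_finite)
  show ?thesis unfolding rep_rel_eq by (rule regular_conv_lang_Un[OF least unrep])
qed

end

section \<open>The graph of \<open>t\<^sub>f\<close> is rational\<close>

instance flat :: (finite, finite) finite
proof
  have eq: "(UNIV :: ('a, 'b) flat set) = range FC \<union> range FQ \<union> range FT"
  proof (rule set_eqI)
    show "x \<in> UNIV \<longleftrightarrow> x \<in> range FC \<union> range FQ \<union> range FT" for x :: "('a, 'b) flat"
      by (cases x) auto
  qed
  show "finite (UNIV :: ('a, 'b) flat set)"
    by (subst eq) (intro finite_UnI finite_imageI finite_UNIV)
qed

lemma is_block_cases:
  assumes "is_block A s"
  obtains (call) a where "kind A a = KCall" "s = [FC a]"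
  | (tau) \<tau> qs where "s = FT \<tau> # map FQ qs"
  using assms by (auto simp: is_block_def)

lemma tf_init_fst: "fst (tf_init A qs) = [bot A]"
  by (simp add: tf_init_def init_conf_def split: list.splits)

lemma snd_tf_init: "snd (tf_init A qs) = (case qs of [] \<Rightarrow> q0 A | q # _ \<Rightarrow> q)"
  by (simp add: tf_init_def init_conf_def split: list.splits)

text \<open>A flat word is aligned with its configuration word on a second track: the initial
  \<open>bot\<close> in a row of its own, a call letter in one row with the symbol it pushes, and the final
  state in a last row of its own.\<close>

type_synonym ('a, 'g, 'q) align_row = "('a, 'q) flat option \<times> ('g + 'q) option"

abbreviation state_rows :: "'q list \<Rightarrow> ('a, 'g, 'q) align_row list" where
  "state_rows qs \<equiv> map (\<lambda>q. (Some (FQ q), None)) qs"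

definition block_rows ::
  "('q, 'g, 'a) vpa \<Rightarrow> 'q \<Rightarrow> ('a, 'q) flat list \<Rightarrow> ('a, 'g, 'q) align_row list" where
  "block_rows A p s = (case s of
      [FC a] \<Rightarrow> [(Some (FC a), Some (Inl (fst (dc A p a))))]
    | _ \<Rightarrow> map (\<lambda>x. (Some x, None)) s)"

primrec blocks_rows ::
  "('q, 'g, 'a) vpa \<Rightarrow> 'q \<Rightarrow> ('a, 'q) flat list list \<Rightarrow> ('a, 'g, 'q) align_row list" where
  "blocks_rows A p [] = [(None, Some (Inr p))]"
| "blocks_rows A p (s # ss) = block_rows A p s @ blocks_rows A (snd (block_step A ([], p) s)) ss"

definition align_word ::
  "('q, 'g, 'a) vpa \<Rightarrow> 'q list \<Rightarrow> ('a, 'q) flat list list \<Rightarrow> ('a, 'g, 'q) align_row list" where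
  "align_word A qs ss =
     (None, Some (Inl (bot A))) # state_rows qs @ blocks_rows A (snd (tf_init A qs)) ss"

lemma block_rows_FT: "block_rows A p (FT \<tau> # map FQ qs) = (Some (FT \<tau>), None) # state_rows qs"
  by (simp add: block_rows_def)

lemma somes_map_Some_comp [simp]: "somes (map (\<lambda>x. Some (f x)) xs) = map f xs"
  by (induction xs) simp_all

lemma somes_map_None [simp]: "somes (map (\<lambda>x. None) xs) = []"
  by (induction xs) simp_all

lemma somes_fst_blocks_rows:
  assumes "\<forall>s\<in>set ss. is_block A s"
  shows "somes (map fst (blocks_rows A p ss)) = concat ss"
  using assms
proof (induction ss arbitrary: p)
  case (Cons s ss)
  from Cons.prems have "is_block A s" by simp
  then show ?case using Cons by (cases rule: is_block_cases) (simp_all add: block_rows_def comp_def)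
qed simp

lemma somes_snd_blocks_rows:
  assumes "\<forall>s\<in>set ss. is_block A s"
  shows "map Inl (fst c) @ somes (map snd (blocks_rows A (snd c) ss)) =
    conf_word (foldl (block_step A) c ss)"
  using assms
proof (induction ss arbitrary: c)
  case Nil
  then show ?case by (simp add: conf_word_def)
next
  case (Cons s ss)
  obtain al p where c: "c = (al, p)" by fastforce
  from Cons.prems have "is_block A s" by simp
  then have "map Inl al @ somes (map snd (block_rows A p s)) = map Inl (fst (block_step A c s)) \<and>
      snd (block_step A ([], p) s) = snd (block_step A c s)"
    by (cases rule: is_block_cases) (simp_all add: c block_rows_def comp_def)
  then show ?case
    using Cons.IH[of "block_step A c s"] Cons.prems by (simp add: c) (metis append_assoc)
qed

lemma somes_align_word:
  assumes "\<forall>s\<in>set ss. is_block A s"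
  shows "somes (map fst (align_word A qs ss)) = map FQ qs @ concat ss"
    and "somes (map snd (align_word A qs ss)) = conf_word (foldl (block_step A) (tf_init A qs) ss)"
  using somes_fst_blocks_rows[OF assms] somes_snd_blocks_rows[OF assms, of "tf_init A qs"]
  by (simp_all add: align_word_def tf_init_fst comp_def)

lemma align_word_not_None_None: "r \<in> set (align_word A qs ss) \<Longrightarrow> r \<noteq> (None, None)"
proof -
  have "r \<in> set (blocks_rows A p ss) \<Longrightarrow> r \<noteq> (None, None)" for p
    by (induction ss arbitrary: p) (auto simp: block_rows_def split: list.splits flat.splits)
  then show "r \<in> set (align_word A qs ss) \<Longrightarrow> r \<noteq> (None, None)" by (auto simp: align_word_def)
qed

text \<open>Aligned words are recognised by a finite automaton that keeps track of the current
  state of \<open>A\<close> only: \<open>APrefix\<close> reads \<open>s\<^sub>0\<close> (remembering its first state), \<open>ABlock p\<close> expects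
  the next block and \<open>ATau p\<close> reads the states \<open>q\<^sub>2 \<dots> q\<^sub>k\<close> of a \<open>\<tau>\<close>-block.\<close>

datatype 'q align_state = AInit | APrefix "'q option" | ABlock 'q | ATau 'q | AAccept | ASink

instance align_state :: (finite) finite
proof
  have eq: "(UNIV :: 'a align_state set) =
      {AInit, AAccept, ASink} \<union> range APrefix \<union> range ABlock \<union> range ATau"
  proof (rule set_eqI)
    show "x \<in> UNIV \<longleftrightarrow> x \<in> {AInit, AAccept, ASink} \<union> range APrefix \<union> range ABlock \<union> range ATau"
      for x :: "'a align_state"
      by (cases x) auto
  qed
  show "finite (UNIV :: 'a align_state set)"
    by (subst eq) (intro finite_UnI finite_imageI finite_UNIV finite.insertI finite.emptyI)
qed

definition align_block_step ::
  "('q, 'g, 'a) vpa \<Rightarrow> 'q \<Rightarrow> ('a, 'g, 'q) align_row \<Rightarrow> 'q align_state" where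
  "align_block_step A p r = (case r of
      (Some (FC a), Some (Inl g)) \<Rightarrow>
        if kind A a = KCall \<and> g = fst (dc A p a) then ABlock (snd (dc A p a)) else ASink
    | (Some (FT \<tau>), None) \<Rightarrow> ATau (\<tau> p)
    | (None, Some (Inr q)) \<Rightarrow> if q = p then AAccept else ASink
    | _ \<Rightarrow> ASink)"

fun is_state_row :: "('a, 'g, 'q) align_row \<Rightarrow> bool" where
  "is_state_row (Some (FQ q), None) = True"
| "is_state_row _ = False"

fun row_state :: "('a, 'g, 'q) align_row \<Rightarrow> 'q" where
  "row_state (Some (FQ q), None) = q"
| "row_state _ = undefined"

fun align_step ::
  "('q, 'g, 'a) vpa \<Rightarrow> 'q align_state \<Rightarrow> ('a, 'g, 'q) align_row \<Rightarrow> 'q align_state" where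
  "align_step A AInit r = (if r = (None, Some (Inl (bot A))) then APrefix None else ASink)"
| "align_step A (APrefix q1) r =
    (if is_state_row r then APrefix (case q1 of None \<Rightarrow> Some (row_state r) | Some q \<Rightarrow> Some q)
     else align_block_step A (case q1 of None \<Rightarrow> q0 A | Some q \<Rightarrow> q) r)"
| "align_step A (ABlock p) r = align_block_step A p r"
| "align_step A (ATau p) r = (if is_state_row r then ATau p else align_block_step A p r)"
| "align_step A AAccept r = ASink"
| "align_step A ASink r = ASink"

lemma foldl_align_step_ASink [simp]: "foldl (align_step A) ASink x = ASink"
  by (induction x) simp_all

lemma foldl_align_step_AAccept: "foldl (align_step A) AAccept x = AAccept \<Longrightarrow> x = []"
  by (cases x) simp_all

lemma foldl_align_step_ATau_state_rows: "foldl (align_step A) (ATau p) (state_rows qs) = ATau p"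
  by (induction qs) simp_all

lemma foldl_align_step_APrefix_state_rows:
  "foldl (align_step A) (APrefix None) (state_rows qs) =
    APrefix (case qs of [] \<Rightarrow> None | q # _ \<Rightarrow> Some q)"
proof -
  have "foldl (align_step A) (APrefix (Some q)) (state_rows qs) = APrefix (Some q)" for q
    by (induction qs) simp_all
  then show ?thesis by (cases qs) simp_all
qed

definition expects_block :: "('q, 'g, 'a) vpa \<Rightarrow> 'q align_state \<Rightarrow> 'q \<Rightarrow> bool" where
  "expects_block A s p \<longleftrightarrow>
     s = ABlock p \<or> s = ATau p \<or> (\<exists>q1. s = APrefix q1 \<and> p = (case q1 of None \<Rightarrow> q0 A | Some q \<Rightarrow> q))"

lemma blocks_rows_accepted:
  assumes "\<forall>s\<in>set ss. is_block A s" "expects_block A s p"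
  shows "foldl (align_step A) s (blocks_rows A p ss) = AAccept"
  using assms
proof (induction ss arbitrary: s p)
  case Nil
  then show ?case by (auto simp: expects_block_def align_block_step_def)
next
  case (Cons b ss)
  have step: "align_step A s r = align_block_step A p r" if "\<not> is_state_row r" for r
    using Cons.prems(2) that by (auto simp: expects_block_def)
  from Cons.prems(1) have "is_block A b" by simp
  then show ?case
  proof (cases rule: is_block_cases)
    case (call a)
    then show ?thesis
      using Cons step[of "(Some (FC a), Some (Inl (fst (dc A p a))))"]
      by (simp add: block_rows_def align_block_step_def expects_block_def)
  next
    case (tau \<tau> qs)
    then show ?thesis
      using Cons step[of "(Some (FT \<tau>), None)"] foldl_align_step_ATau_state_rows[of A "\<tau> p" qs]
      by (simp add: block_rows_FT align_block_step_def expects_block_def)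
  qed
qed

lemma align_word_accepted:
  assumes "\<forall>s\<in>set ss. is_block A s"
  shows "foldl (align_step A) AInit (align_word A qs ss) = AAccept"
proof -
  have "expects_block A (APrefix (case qs of [] \<Rightarrow> None | q # _ \<Rightarrow> Some q)) (snd (tf_init A qs))"
    by (auto simp: expects_block_def snd_tf_init split: list.splits)
  then show ?thesis
    using blocks_rows_accepted[OF assms] foldl_align_step_APrefix_state_rows[of A qs]
    by (simp add: align_word_def)
qed

definition block_words :: "('q, 'g, 'a) vpa \<Rightarrow> 'q \<Rightarrow> ('a, 'g, 'q) align_row list set" where
  "block_words A p = {blocks_rows A p ss | ss. \<forall>s\<in>set ss. is_block A s}"

lemma Cons_in_block_words:
  assumes "align_block_step A p r = s" "s \<noteq> ASink" "foldl (align_step A) s x = AAccept"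
    and "\<And>p'. s = ABlock p' \<Longrightarrow> x \<in> block_words A p'"
    and "\<And>p'. s = ATau p' \<Longrightarrow> \<exists>qs y. x = state_rows qs @ y \<and> y \<in> block_words A p'"
  shows "r # x \<in> block_words A p"
proof -
  consider (call) a where "kind A a = KCall" "r = (Some (FC a), Some (Inl (fst (dc A p a))))"
      "s = ABlock (snd (dc A p a))"
    | (tau) \<tau> where "r = (Some (FT \<tau>), None)" "s = ATau (\<tau> p)"
    | (final) "r = (None, Some (Inr p))" "s = AAccept"
    using assms(1,2)
    by (cases r)
      (auto simp: align_block_step_def split: option.splits flat.splits sum.splits if_splits)
  then show ?thesis
  proof cases
    case call
    then obtain ss where "\<forall>s\<in>set ss. is_block A s" "x = blocks_rows A (snd (dc A p a)) ss"
      using assms(4) by (auto simp: block_words_def)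
    then show ?thesis using call unfolding block_words_def
      by (intro CollectI exI[of _ "[FC a] # ss"]) (auto simp: is_block_def block_rows_def)
  next
    case tau
    then obtain qs ss where "\<forall>s\<in>set ss. is_block A s" "x = state_rows qs @ blocks_rows A (\<tau> p) ss"
      using assms(5) by (auto simp: block_words_def)
    then show ?thesis using tau unfolding block_words_def
      by (intro CollectI exI[of _ "(FT \<tau> # map FQ qs) # ss"])
        (auto simp: is_block_def block_rows_FT)
  next
    case final
    then have "x = []" using assms(3) foldl_align_step_AAccept by simp
    then show ?thesis using final unfolding block_words_def by (intro CollectI exI[of _ "[]"]) simp
  qed
qed

lemma accepted_from_ABlock_ATau:
  "(foldl (align_step A) (ABlock p) x = AAccept \<longrightarrow> x \<in> block_words A p) \<and>
   (foldl (align_step A) (ATau p) x = AAccept \<longrightarrow>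
      (\<exists>qs y. x = state_rows qs @ y \<and> y \<in> block_words A p))"
proof (induction x arbitrary: p)
  case (Cons r x)
  have block: "r # x \<in> block_words A p"
    if "foldl (align_step A) (align_block_step A p r) x = AAccept" for p
    using that Cons.IH by (intro Cons_in_block_words[OF refl]) auto
  moreover have "\<exists>qs y. r # x = state_rows qs @ y \<and> y \<in> block_words A p"
    if acc: "foldl (align_step A) (ATau p) (r # x) = AAccept"
  proof (cases "is_state_row r")
    case True
    then obtain q where r: "r = (Some (FQ q), None)" by (cases r rule: is_state_row.cases) auto
    then have "\<exists>qs y. x = state_rows qs @ y \<and> y \<in> block_words A p"
      using acc Cons.IH by simp
    then obtain qs y where "x = state_rows qs @ y" "y \<in> block_words A p" by blast
    then show ?thesis using r by (intro exI[of _ "q # qs"] exI[of _ y]) simp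
  next
    case False
    then show ?thesis using acc block by (intro exI[of _ "[]"] exI[of _ "r # x"]) simp
  qed
  ultimately show ?case by simp
qed simp

lemma accepted_from_APrefix:
  "foldl (align_step A) (APrefix q1) x = AAccept \<Longrightarrow> \<exists>qs y. x = state_rows qs @ y \<and>
     y \<in> block_words A (case q1 of Some q \<Rightarrow> q | None \<Rightarrow> (case qs of [] \<Rightarrow> q0 A | q # _ \<Rightarrow> q))"
proof (induction x arbitrary: q1)
  case (Cons r x)
  show ?case
  proof (cases "is_state_row r")
    case True
    then obtain q where r: "r = (Some (FQ q), None)" by (cases r rule: is_state_row.cases) auto
    define q2 where "q2 = (case q1 of None \<Rightarrow> Some q | Some q' \<Rightarrow> Some q')"
    have "foldl (align_step A) (APrefix q2) x = AAccept"
      using Cons.prems unfolding r q2_def by (cases q1) simp_all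
    from Cons.IH[OF this] obtain qs y where "x = state_rows qs @ y"
      "y \<in> block_words A (case q2 of Some q \<Rightarrow> q | None \<Rightarrow> (case qs of [] \<Rightarrow> q0 A | q # _ \<Rightarrow> q))"
      by blast
    then show ?thesis using r
      by (intro exI[of _ "q # qs"] exI[of _ y]) (auto simp: q2_def split: option.splits)
  next
    case False
    define p where "p = (case q1 of None \<Rightarrow> q0 A | Some q \<Rightarrow> q)"
    have "foldl (align_step A) (ABlock p) (r # x) = AAccept" using Cons.prems False
      by (simp add: p_def)
    then have "r # x \<in> block_words A p" using accepted_from_ABlock_ATau[of A p "r # x"] by simp
    then show ?thesis
      by (intro exI[of _ "[]"] exI[of _ "r # x"]) (simp add: p_def split: option.splits)
  qed
qed simp

definition align_words :: "('q, 'g, 'a) vpa \<Rightarrow> ('a, 'g, 'q) align_row list set" where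
  "align_words A = {align_word A qs ss | qs ss. \<forall>s\<in>set ss. is_block A s}"

lemma align_words_eq_accepted: "align_words A = {x. foldl (align_step A) AInit x \<in> {AAccept}}"
proof (intro equalityI subsetI)
  fix x assume "x \<in> align_words A"
  then show "x \<in> {x. foldl (align_step A) AInit x \<in> {AAccept}}"
    using align_word_accepted by (auto simp: align_words_def)
next
  fix x assume x: "x \<in> {x. foldl (align_step A) AInit x \<in> {AAccept}}"
  then obtain x' where "x = (None, Some (Inl (bot A))) # x'"
    by (cases x) (auto split: if_splits)
  moreover from this obtain qs y where "x' = state_rows qs @ y"
    "y \<in> block_words A (case qs of [] \<Rightarrow> q0 A | q # _ \<Rightarrow> q)"
    using accepted_from_APrefix[of A None x'] x by auto
  ultimately show "x \<in> align_words A"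
    by (auto simp: align_words_def block_words_def align_word_def snd_tf_init)
qed

lemma regular_align_words: "regular (align_words (A :: ('q::finite, 'g, 'a) vpa))"
  unfolding align_words_eq_accepted by (rule regular_foldl)

definition align_hom :: "('a, 'g, 'q) align_row \<Rightarrow> ('a, 'q) flat list \<times> ('g + 'q) list" where
  "align_hom r = (list_of_option (fst r), list_of_option (snd r))"

lemma pair_hom_align_hom: "pair_hom align_hom x = (somes (map fst x), somes (map snd x))"
  by (simp add: pair_hom_def align_hom_def somes_def comp_def)

lemma tf_rel_eq_image: "tf_rel A = pair_hom align_hom ` align_words A"
proof (intro equalityI subsetI)
  fix p assume "p \<in> tf_rel A"
  then obtain qs ss where p: "\<forall>s\<in>set ss. is_block A s"
    "p = (map FQ qs @ concat ss, conf_word (foldl (block_step A) (tf_init A qs) ss))"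
    by (auto simp: tf_rel_def tf_graph_def)
  then have "p = pair_hom align_hom (align_word A qs ss)"
    by (simp add: pair_hom_align_hom somes_align_word)
  then show "p \<in> pair_hom align_hom ` align_words A" using p(1) by (auto simp: align_words_def)
next
  fix p assume "p \<in> pair_hom align_hom ` align_words A"
  then obtain qs ss where p: "\<forall>s\<in>set ss. is_block A s" "p = pair_hom align_hom (align_word A qs ss)"
    by (auto simp: align_words_def)
  then have "p = (map FQ qs @ concat ss, conf_word (foldl (block_step A) (tf_init A qs) ss))"
    by (simp add: pair_hom_align_hom somes_align_word)
  then show "p \<in> tf_rel A" using p(1) unfolding tf_rel_def tf_graph_def by blast
qed

lemma rational_tf_rel:
  fixes A :: "('q::finite, 'g::finite, 'a::finite) vpa"
  shows "rational (tf_rel A)"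
  unfolding tf_rel_eq_image by (rule rational_image_regular[OF regular_align_words]) auto

section \<open>The graph of \<open>\<nu>\<^sub>f\<close> is rational\<close>

text \<open>Three tracks: the flat word \<open>w\<close>, the configuration word of \<open>t\<^sub>f w\<close> and that of
  \<open>rep (t\<^sub>f w)\<close>.  The first two tracks form the aligned word of \<open>w\<close>, the last two the reversed
  convolution of the two configuration words; \<open>merge\<close> interleaves two such words along the
  shared middle track.\<close>

type_synonym ('g, 'q) conv_row = "('g + 'q) option \<times> ('g + 'q) option"

type_synonym ('a, 'g, 'q) merge_row = "('a, 'q) flat option \<times> ('g, 'q) conv_row"

definition drop_third :: "('a, 'g, 'q) merge_row \<Rightarrow> ('a, 'g, 'q) align_row list" where
  "drop_third r = (if fst r = None \<and> fst (snd r) = None then [] else [(fst r, fst (snd r))])"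

definition drop_first :: "('a, 'g, 'q) merge_row \<Rightarrow> ('g, 'q) conv_row list" where
  "drop_first r = (if fst (snd r) = None \<and> snd (snd r) = None then [] else [snd r])"

definition merge_hom :: "('a, 'g, 'q) merge_row \<Rightarrow> ('a, 'q) flat list \<times> ('g + 'q) list" where
  "merge_hom r = (list_of_option (fst r), list_of_option (snd (snd r)))"

lemma pair_hom_merge_hom:
  "pair_hom merge_hom x = (somes (map fst x), somes (map (\<lambda>r. snd (snd r)) x))"
  by (simp add: pair_hom_def merge_hom_def somes_def comp_def)

lemma somes_drop_third:
  "somes (map fst (concat (map drop_third x))) = somes (map fst x)"
  "somes (map snd (concat (map drop_third x))) = somes (map (\<lambda>r. fst (snd r)) x)"
  by (induction x) (auto simp: drop_third_def somes_def)

lemma somes_drop_first: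
  "somes (map fst (concat (map drop_first x))) = somes (map (\<lambda>r. fst (snd r)) x)"
  "somes (map snd (concat (map drop_first x))) = somes (map (\<lambda>r. snd (snd r)) x)"
  by (induction x) (auto simp: drop_first_def somes_def)

fun merge ::
  "('a, 'g, 'q) align_row list \<Rightarrow> ('g, 'q) conv_row list \<Rightarrow> ('a, 'g, 'q) merge_row list" where
  "merge a ((None, g') # y) = (None, None, g') # merge a y"
| "merge ((f, None) # a) y = (f, None, None) # merge a y"
| "merge ((f, Some g) # a) ((Some g0, g') # y) = (f, Some g, g') # merge a y"
| "merge a y = []"

lemma merge_rows:
  assumes "\<forall>r\<in>set a. r \<noteq> (None, None)" "\<forall>r\<in>set y. r \<noteq> (None, None)"
    and "somes (map snd a) = somes (map fst y)"
  shows "concat (map drop_third (merge a y)) = a \<and> concat (map drop_first (merge a y)) = y \<and>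
    somes (map fst (merge a y)) = somes (map fst a) \<and>
    somes (map (\<lambda>r. snd (snd r)) (merge a y)) = somes (map snd y)"
  using assms
    by (induction a y rule: merge.induct) (auto simp: drop_third_def drop_first_def somes_def)

lemma proper_stack_foldl_block_step:
  assumes "wf_vpa A" "\<forall>s\<in>set ss. is_block A s" "proper_stack A (fst c)"
  shows "proper_stack A (fst (foldl (block_step A) c ss))"
  using assms(2,3)
proof (induction ss arbitrary: c)
  case (Cons s ss)
  from Cons.prems(1) have "is_block A s" by simp
  then have "proper_stack A (fst (block_step A c s))"
  proof (cases rule: is_block_cases)
    case (call a)
    then show ?thesis using proper_stack_step[OF assms(1) Cons.prems(2), of "snd c" a]
      by (cases c) simp
  next
    case (tau \<tau> qs)
    then show ?thesis using Cons.prems(2) by (cases c) simp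
  qed
  then show ?case using Cons by simp
qed simp

definition merged_words ::
  "('q::linorder, 'g::linorder, 'a) vpa \<Rightarrow> ('a, 'g, 'q) merge_row list set" where
  "merged_words A = {x. concat (map drop_third x) \<in> align_words A \<and>
     concat (map drop_first x) \<in> rev ` conv_lang (rep_rel A)}"

context
  fixes A :: "('q::{finite,linorder}, 'g::{finite,linorder}, 'a::finite) vpa"
  assumes wf: "wf_vpa A"
begin

lemma regular_merged_words: "regular (merged_words A)"
proof -
  have "merged_words A = {x. concat (map drop_third x) \<in> align_words A} \<inter>
      {x. concat (map drop_first x) \<in> rev ` conv_lang (rep_rel A)}"
    by (auto simp: merged_words_def)
  then show ?thesis
    by (simp only:) (intro regular_Int regular_vimage_concat_map regular_align_words
        regular_rev_image regular_conv_lang_rep_rel[OF wf])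
qed

lemma nuf_rel_subset_image: "nuf_rel A \<subseteq> pair_hom merge_hom ` merged_words A"
proof
  fix p assume "p \<in> nuf_rel A"
  then obtain qs ss where p: "\<forall>s\<in>set ss. is_block A s"
    "p = (map FQ qs @ concat ss, conf_word (rep A (foldl (block_step A) (tf_init A qs) ss)))"
    by (auto simp: nuf_rel_def tf_graph_def)
  define c where "c = foldl (block_step A) (tf_init A qs) ss"
  have "c \<in> proper_confs A"
    using proper_stack_foldl_block_step[OF wf p(1), of "tf_init A qs"]
    by (simp add: c_def proper_confs_def tf_init_fst proper_stack_def)
  then have y: "conv (rconf_word c) (rconf_word (rep A c)) \<in> conv_lang (rep_rel A)"
    unfolding conv_in_conv_lang rep_rel_def by blast
  define a where "a = align_word A qs ss"
  define y where "y = rev (conv (rconf_word c) (rconf_word (rep A c)))"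
  have "somes (map snd a) = somes (map fst y)"
    using somes_align_word(2)[OF p(1), of qs]
    by (simp add: a_def y_def c_def somes_rev rconf_word_eq_rev_conf_word flip: rev_map)
  moreover have "\<forall>r\<in>set a. r \<noteq> (None, None)" "\<forall>r\<in>set y. r \<noteq> (None, None)"
    unfolding a_def y_def set_rev by (blast dest: align_word_not_None_None conv_not_None_None)+
  ultimately have merge: "concat (map drop_third (merge a y)) = a"
    "concat (map drop_first (merge a y)) = y"
    "somes (map fst (merge a y)) = somes (map fst a)"
    "somes (map (\<lambda>r. snd (snd r)) (merge a y)) = somes (map snd y)"
    using merge_rows by blast+
  have "merge a y \<in> merged_words A"
    using merge(1,2) p(1) y by (auto simp: merged_words_def align_words_def a_def y_def)
  moreover have "pair_hom merge_hom (merge a y) = p"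
    using merge(3,4) somes_align_word(1)[OF p(1), of qs] p(2)
    by (simp add: pair_hom_merge_hom a_def y_def c_def somes_rev rconf_word_eq_rev_conf_word
        flip: rev_map)
  ultimately show "p \<in> pair_hom merge_hom ` merged_words A" by blast
qed

lemma image_subset_nuf_rel: "pair_hom merge_hom ` merged_words A \<subseteq> nuf_rel A"
proof
  fix p assume "p \<in> pair_hom merge_hom ` merged_words A"
  then obtain x where x: "p = pair_hom merge_hom x" "x \<in> merged_words A" by blast
  then obtain qs ss where a: "concat (map drop_third x) = align_word A qs ss"
    "\<forall>s\<in>set ss. is_block A s"
    by (auto simp: merged_words_def align_words_def)
  from x obtain c
    where c: "concat (map drop_first x) = rev (conv (rconf_word c) (rconf_word (rep A c)))"
    by (auto simp: merged_words_def rep_rel_def conv_lang_def)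
  have "somes (map (\<lambda>r. fst (snd r)) x) = conf_word (foldl (block_step A) (tf_init A qs) ss)"
    using somes_drop_third(2)[of x] a somes_align_word(2)[OF a(2)] by simp
  moreover have "somes (map (\<lambda>r. fst (snd r)) x) = conf_word c"
    using somes_drop_first(1)[of x] c
      by (simp add: somes_rev rconf_word_eq_rev_conf_word flip: rev_map)
  ultimately have "c = foldl (block_step A) (tf_init A qs) ss" using conf_word_inj by metis
  moreover have "somes (map fst x) = map FQ qs @ concat ss"
    using somes_drop_third(1)[of x] a somes_align_word(1)[OF a(2)] by simp
  moreover have "somes (map (\<lambda>r. snd (snd r)) x) = conf_word (rep A c)"
    using somes_drop_first(2)[of x] c
      by (simp add: somes_rev rconf_word_eq_rev_conf_word flip: rev_map)
  ultimately have
    "p = (map FQ qs @ concat ss, conf_word (rep A (foldl (block_step A) (tf_init A qs) ss)))"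
    using x(1) by (simp add: pair_hom_merge_hom)
  then show "p \<in> nuf_rel A" using a(2) unfolding nuf_rel_def tf_graph_def by blast
qed

lemma rational_nuf_rel: "rational (nuf_rel A)"
proof -
  have "nuf_rel A = pair_hom merge_hom ` merged_words A"
    using nuf_rel_subset_image image_subset_nuf_rel by (rule equalityI)
  then show ?thesis using rational_image_regular[OF regular_merged_words, of UNIV] by simp
qed

end

theorem lemma8:
  fixes A :: "('q::{finite,linorder}, 'g::{finite,linorder}, 'a::finite) vpa"
  assumes "wf_vpa A"
  shows "rational (tf_rel A) \<and> rational (nuf_rel A)"
  using rational_tf_rel rational_nuf_rel[OF assms] by blast

end
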